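(* Consider an instance of \textsc{MaxToll} and let $P_0$ be a shortest $s$–$t$ path when all tolls are zero, of length $\mathcal{L}_0$, and assume $P_0$ contains $m_T^{P_0}\ge1$ toll arcs. Let $APP$ be the revenue returned by \textsc{ExploreDescendants}$(P_0)$. Then $$APP\ \ge\ \frac{1}{\alpha(m_T^{P_0})}\,LP\ \ge\ \frac{1}{\alpha(m_T)}\,OPT,$$ where $LP=\mathcal{L}_\infty-\mathcal{L}_0$ and $OPT$ is the optimal value of the instance.
   Context: \textsc{MaxToll}: a directed multigraph $G=(V,A)$ with $A=A_T\cup A_U$ partitioned into toll arcs ($|A_T|=m_T$) and toll-free arcs, fixed costs $c:A_T\to\mathbf{N}$, $d:A_U\to\mathbf{N}$, vertices $s,t$ with an $s$–$t$ path using only toll-free arcs. Under a nonnegative toll vector $T$ a toll arc $e$ costs $c(e)+T(e)$ and a toll-free arc costs $d(e)$; path length is the sum of arc costs. $OPT$ is the maximum of $\sum_{e\in A_T\cap P}T(e)$ over nonnegative $T$ and simple $s$–$t$ paths $P$ that are shortest under $T$. $\mathcal{L}_\infty$ is the length of a shortest toll-free $s$–$t$ path; for a path $P$, $\mathcal{L}(P)$ is its length with zero tolls and $B(P)=\mathcal{L}_\infty-\mathcal{L}(P)$. $\mathcal{N}_T(P)$ is the network with toll arcs not on $P$ deleted. An $s$–$t$ path $P$ is valid if it has $m_T^P\ge1$ toll arcs and is a shortest $s$–$t$ path in $\mathcal{N}_0(P)$. For a path $P$ with toll arcs $\tau_1,\dots,\tau_m$ in traversal order, set $\mathrm{TERM}(\tau_0)=s$,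 $\mathrm{INIT}(\tau_{m+1})=t$; $\mathcal{U}_{i,j}$ is the length of a shortest toll-free path $\upsilon_{i,j}$ from $\mathrm{TERM}(\tau_i)$ to $\mathrm{INIT}(\tau_j)$ ($+\infty$ if none), and $\mathcal{L}_{k,l}=\sum_{i=k}^{l-1}\mathcal{U}_{i,i+1}+\sum_{i=k+1}^{l-1}c(\tau_i)$. Define $\alpha(1)=1$, and for $k\ge2$, $\alpha(k)=\frac12\max\{1+\alpha(i)+\alpha(j):0<i\le j<k,\ i+j\le k\}$. \textsc{MaxRev}$(P)$: set $k:=1$; while $k<m+1$: compute $t_k=\min_{0\le i<k<j\le m+1}\{\mathcal{U}_{i,j}-\mathcal{L}_{i,j}-\sum_{l=i+1}^{k-1}t_l\}$, let $(i'(k),j'(k))$ be the minimizing pair (ties: largest $j$, then smallest $i$), set $t_l:=0$ and $(i'(l),j'(l)):=(i'(k),j'(k))$ for $k<l<j'(k)$, and set $k:=j'(k)$. Output tolls $T_P(\tau_k)=t_k$ ($+\infty$ on toll arcs off $P$), revenue $V_P=\sum_k t_k$ and the pairs $(i'(k),j'(k))$. \textsc{TollPartition}$(P)$: starting from $l:=m$, repeatedly record $(i'(l),j'(l))$ and set $l:=i'(l)$ until $l=0$; list the $q$ recorded pairs in reverse order as $(i(1),j(1)),\dots,(i(q),j(q))$. $P_1$ uses $\upsilon_{i(h),j(h)}$ for odd $h$ and follows $P$ in between (and before the first/after the last); $P_2$ likewise with even $h$. \textsc{ExploreDescendants}$(P)$: compute $(V_P,T_P)$ by \textsc{MaxRev}$(P)$;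 if $V_P<B(P)$, compute $(P_1,P_2)$ by \textsc{TollPartition}$(P)$, run \textsc{ExploreDescendants} recursively on $P_1$ and $P_2$, and return the best (largest revenue) among $V_P$ and the two recursive results, together with its tolls and path; otherwise return $(V_P,T_P,P)$. *)

theory Defs
  imports "HOL-Analysis.Analysis"
begin

text \<open>A directed multigraph given by arc identifiers of type 'e with tail/head maps;
 toll arcs tollA (costs c), toll-free arcs freeA (costs d), source src, sink snk.\<close>

record ('v,'e) tollnet =
  arc_tail :: "'e \<Rightarrow> 'v"
  arc_head :: "'e \<Rightarrow> 'v"
  tollA :: "'e set"
  freeA :: "'e set"
  c :: "'e \<Rightarrow> nat"
  d :: "'e \<Rightarrow> nat"
  src :: 'v
  snk :: 'v

definition allA :: "('v,'e) tollnet \<Rightarrow> 'e set" where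
  "allA G = tollA G \<union> freeA G"

fun walk :: "('v,'e) tollnet \<Rightarrow> 'v \<Rightarrow> 'e list \<Rightarrow> 'v \<Rightarrow> bool" where
  "walk G u [] v = (u = v)"
| "walk G u (e # es) v = (arc_tail G e = u \<and> walk G (arc_head G e) es v)"

definition spath :: "('v,'e) tollnet \<Rightarrow> 'e set \<Rightarrow> 'v \<Rightarrow> 'e list \<Rightarrow> 'v \<Rightarrow> bool" where
  "spath G S u P v \<longleftrightarrow> walk G u P v \<and> distinct (u # map (arc_head G) P) \<and> set P \<subseteq> S"

definition maxtoll_instance :: "('v,'e) tollnet \<Rightarrow> bool" where
  "maxtoll_instance G \<longleftrightarrow> finite (tollA G) \<and> finite (freeA G) \<and> tollA G \<inter> freeA G = {}
     \<and> (\<exists>Q. spath G (freeA G) (src G) Q (snk G))"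

definition arc_cost :: "('v,'e) tollnet \<Rightarrow> ('e \<Rightarrow> real) \<Rightarrow> 'e \<Rightarrow> real" where
  "arc_cost G T e = (if e \<in> tollA G then real (c G e) + T e else real (d G e))"

definition plen :: "('v,'e) tollnet \<Rightarrow> ('e \<Rightarrow> real) \<Rightarrow> 'e list \<Rightarrow> real" where
  "plen G T P = sum_list (map (arc_cost G T) P)"

definition L0 :: "('v,'e) tollnet \<Rightarrow> 'e list \<Rightarrow> real" where
  "L0 G P = plen G (\<lambda>_. 0) P"

definition revenue :: "('v,'e) tollnet \<Rightarrow> ('e \<Rightarrow> real) \<Rightarrow> 'e list \<Rightarrow> real" where
  "revenue G T P = sum_list (map (\<lambda>e. if e \<in> tollA G then T e else 0) P)"

definition shortest_stpath :: "('v,'e) tollnet \<Rightarrow> ('e \<Rightarrow> real) \<Rightarrow> 'e set \<Rightarrow> 'e list \<Rightarrow> bool" where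
  "shortest_stpath G T S P \<longleftrightarrow> spath G S (src G) P (snk G) \<and>
     (\<forall>Q. spath G S (src G) Q (snk G) \<longrightarrow> plen G T P \<le> plen G T Q)"

text \<open>OPT: supremum (indeed maximum) of the revenue over nonnegative tolls and
 simple s-t paths that are shortest under these tolls\<close>
definition OPT :: "('v,'e) tollnet \<Rightarrow> real" where
  "OPT G = Sup {revenue G T P | T P. (\<forall>e\<in>tollA G. 0 \<le> T e) \<and> shortest_stpath G T (allA G) P}"

text \<open>shortest toll-free path length from u to v (+\<infinity> if none)\<close>
definition Ufree :: "('v,'e) tollnet \<Rightarrow> 'v \<Rightarrow> 'v \<Rightarrow> ereal" where
  "Ufree G u v = Inf (ereal ` {L0 G Q | Q. spath G (freeA G) u Q v})"

definition Linf :: "('v,'e) tollnet \<Rightarrow> real" where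
  "Linf G = real_of_ereal (Ufree G (src G) (snk G))"

definition Bval :: "('v,'e) tollnet \<Rightarrow> 'e list \<Rightarrow> real" where
  "Bval G P = Linf G - L0 G P"

definition tpos :: "('v,'e) tollnet \<Rightarrow> 'e list \<Rightarrow> nat list" where
  "tpos G P = filter (\<lambda>n. P ! n \<in> tollA G) [0..<length P]"

definition ntoll :: "('v,'e) tollnet \<Rightarrow> 'e list \<Rightarrow> nat" where
  "ntoll G P = length (tpos G P)"

text \<open>\<tau>_k for 1 \<le> k \<le> m\<close>
definition tau :: "('v,'e) tollnet \<Rightarrow> 'e list \<Rightarrow> nat \<Rightarrow> 'e" where
  "tau G P k = P ! (tpos G P ! (k - 1))"

definition TERMv :: "('v,'e) tollnet \<Rightarrow> 'e list \<Rightarrow> nat \<Rightarrow> 'v" where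
  "TERMv G P i = (if i = 0 then src G else arc_head G (tau G P i))"

definition INITv :: "('v,'e) tollnet \<Rightarrow> 'e list \<Rightarrow> nat \<Rightarrow> 'v" where
  "INITv G P j = (if j = ntoll G P + 1 then snk G else arc_tail G (tau G P j))"

definition Uij :: "('v,'e) tollnet \<Rightarrow> 'e list \<Rightarrow> nat \<Rightarrow> nat \<Rightarrow> ereal" where
  "Uij G P i j = Ufree G (TERMv G P i) (INITv G P j)"

definition Lij :: "('v,'e) tollnet \<Rightarrow> 'e list \<Rightarrow> nat \<Rightarrow> nat \<Rightarrow> ereal" where
  "Lij G P k l = (\<Sum>i\<in>{k..<l}. Uij G P i (i + 1)) + ereal (\<Sum>i\<in>{k+1..<l}. real (c G (tau G P i)))"

definition mr_pairs :: "('v,'e) tollnet \<Rightarrow> 'e list \<Rightarrow> nat \<Rightarrow> (nat \<times> nat) set" where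
  "mr_pairs G P k = {(i, j). i < k \<and> k < j \<and> j \<le> ntoll G P + 1}"

definition mr_obj :: "('v,'e) tollnet \<Rightarrow> 'e list \<Rightarrow> (nat \<Rightarrow> real) \<Rightarrow> nat \<Rightarrow> nat \<times> nat \<Rightarrow> ereal" where
  "mr_obj G P t k ij = (case ij of (i, j) \<Rightarrow>
     Uij G P i j - Lij G P i j - ereal (\<Sum>l\<in>{i+1..<k}. t l))"

definition mr_min :: "('v,'e) tollnet \<Rightarrow> 'e list \<Rightarrow> (nat \<Rightarrow> real) \<Rightarrow> nat \<Rightarrow> ereal" where
  "mr_min G P t k = Min (mr_obj G P t k ` mr_pairs G P k)"

definition mr_j :: "('v,'e) tollnet \<Rightarrow> 'e list \<Rightarrow> (nat \<Rightarrow> real) \<Rightarrow> nat \<Rightarrow> nat" where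
  "mr_j G P t k = Max {j. \<exists>i. (i, j) \<in> mr_pairs G P k \<and> mr_obj G P t k (i, j) = mr_min G P t k}"

definition mr_i :: "('v,'e) tollnet \<Rightarrow> 'e list \<Rightarrow> (nat \<Rightarrow> real) \<Rightarrow> nat \<Rightarrow> nat" where
  "mr_i G P t k = Min {i. (i, mr_j G P t k) \<in> mr_pairs G P k
                       \<and> mr_obj G P t k (i, mr_j G P t k) = mr_min G P t k}"

text \<open>The while loop of MaxRev, run with a fuel counter; since k strictly increases,
 fuel m+1 is enough for the loop to terminate normally.\<close>
fun mr_loop :: "('v,'e) tollnet \<Rightarrow> 'e list \<Rightarrow> nat \<Rightarrow> nat \<Rightarrow> (nat \<Rightarrow> real) \<Rightarrow> (nat \<Rightarrow> nat \<times> nat)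
                 \<Rightarrow> (nat \<Rightarrow> real) \<times> (nat \<Rightarrow> nat \<times> nat)" where
  "mr_loop G P 0 k t pr = (t, pr)"
| "mr_loop G P (Suc n) k t pr =
     (if k < ntoll G P + 1 then
        (let tk = real_of_ereal (mr_min G P t k);
             j' = mr_j G P t k;
             i' = mr_i G P t k;
             t' = (\<lambda>l. if l = k then tk else if k < l \<and> l < j' then 0 else t l);
             pr' = (\<lambda>l. if k \<le> l \<and> l < j' then (i', j') else pr l)
         in mr_loop G P n j' t' pr')
      else (t, pr))"

definition maxrev :: "('v,'e) tollnet \<Rightarrow> 'e list \<Rightarrow> (nat \<Rightarrow> real) \<times> (nat \<Rightarrow> nat \<times> nat)" where
  "maxrev G P = mr_loop G P (ntoll G P + 1) 1 (\<lambda>_. 0) (\<lambda>_. (0, 0))"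

definition VP :: "('v,'e) tollnet \<Rightarrow> 'e list \<Rightarrow> real" where
  "VP G P = (\<Sum>k\<in>{1..ntoll G P}. fst (maxrev G P) k)"

fun tp_rec :: "(nat \<Rightarrow> nat \<times> nat) \<Rightarrow> nat \<Rightarrow> nat \<Rightarrow> (nat \<times> nat) list" where
  "tp_rec pr 0 l = []"
| "tp_rec pr (Suc n) l = (if l = 0 then [] else pr l # tp_rec pr n (fst (pr l)))"

text \<open>the pairs (i(1),j(1)),...,(i(q),j(q)); i'(l) < l, so fuel m+1 suffices\<close>
definition tp_pairs :: "('v,'e) tollnet \<Rightarrow> 'e list \<Rightarrow> (nat \<times> nat) list" where
  "tp_pairs G P = rev (tp_rec (snd (maxrev G P)) (ntoll G P + 1) (ntoll G P))"

text \<open>index in P of the first arc after \<tau>_a (a = 0: start), index of \<tau>_b (b = m+1: end)\<close>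
definition aft :: "('v,'e) tollnet \<Rightarrow> 'e list \<Rightarrow> nat \<Rightarrow> nat" where
  "aft G P a = (if a = 0 then 0 else tpos G P ! (a - 1) + 1)"

definition bef :: "('v,'e) tollnet \<Rightarrow> 'e list \<Rightarrow> nat \<Rightarrow> nat" where
  "bef G P b = (if b = ntoll G P + 1 then length P else tpos G P ! (b - 1))"

text \<open>ups u v is the chosen shortest toll-free path \<upsilon> from u to v\<close>
fun buildp :: "('v,'e) tollnet \<Rightarrow> ('v \<Rightarrow> 'v \<Rightarrow> 'e list) \<Rightarrow> 'e list \<Rightarrow> (nat \<times> nat) list \<Rightarrow> nat \<Rightarrow> 'e list" where
  "buildp G ups P [] cur = drop cur P"
| "buildp G ups P ((a, b) # rest) cur =
     drop cur (take (aft G P a) P) @ ups (TERMv G P a) (INITv G P b) @ buildp G ups P rest (bef G P b)"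

definition P1 :: "('v,'e) tollnet \<Rightarrow> ('v \<Rightarrow> 'v \<Rightarrow> 'e list) \<Rightarrow> 'e list \<Rightarrow> 'e list" where
  "P1 G ups P = buildp G ups P (nths (tp_pairs G P) {n. even n}) 0"

definition P2 :: "('v,'e) tollnet \<Rightarrow> ('v \<Rightarrow> 'v \<Rightarrow> 'e list) \<Rightarrow> 'e list \<Rightarrow> 'e list" where
  "P2 G ups P = buildp G ups P (nths (tp_pairs G P) {n. odd n}) 0"

section \<open>ExploreDescendants (revenue component), with recursion-depth fuel\<close>

fun explore :: "('v,'e) tollnet \<Rightarrow> ('v \<Rightarrow> 'v \<Rightarrow> 'e list) \<Rightarrow> nat \<Rightarrow> 'e list \<Rightarrow> real" where
  "explore G ups 0 P = VP G P"
| "explore G ups (Suc n) P =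
     (if VP G P < Bval G P
      then max (VP G P) (max (explore G ups n (P1 G ups P)) (explore G ups n (P2 G ups P)))
      else VP G P)"

fun alpha :: "nat \<Rightarrow> real" where
  "alpha k = (if k \<le> 1 then 1 else
     (1/2) * Max (set (map (\<lambda>(i, j). 1 + alpha i + alpha j)
        [(i, j). i \<leftarrow> [1..<k], j \<leftarrow> [i..<k], i + j \<le> k])))"

end

theory Submission
  imports Defs
begin

text \<open>Write \<open>B(P) = \<L>\<^sub>\<infinity> - \<L>(P)\<close> and \<open>m\<close> for the number of toll arcs of \<open>P\<close>. MaxRev computes
  tolls \<open>t \<ge> 0\<close> with \<open>\<Sum>\<^bsub>i<l<j\<^esub> t\<^sub>l \<le> U\<^sub>i\<^sub>,\<^sub>j - L\<^sub>i\<^sub>,\<^sub>j\<close> for all \<open>i < j\<close>, with equality on the pairs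
  recorded by TollPartition; these pairs carry all of \<open>V\<^sub>P\<close>, cover every toll arc, and pairs
  two apart in the list are disjoint. The even- and the odd-numbered pairs thus form two chains
  of disjoint intervals, and replacing the stretch of \<open>P\<close> inside each interval by its toll-free
  bypass yields the children \<open>P\<^sub>1\<close> and \<open>P\<^sub>2\<close>. They are again valid, have fewer than \<open>m\<close> toll
  arcs each and at most \<open>m\<close> together, and \<open>B(P\<^sub>1) + B(P\<^sub>2) = 2 B(P) - V\<^sub>P\<close>. Induction on \<open>m\<close>
  with \<open>1 + \<alpha>(m\<^sub>1) + \<alpha>(m\<^sub>2) \<le> 2 \<alpha>(m)\<close> gives \<open>B(P) \<le> \<alpha>(m) \<cdot> APP\<close>. A shortest path \<open>P\<^sub>0\<close> is valid,
  and \<open>OPT \<le> B(P\<^sub>0)\<close> because a path that is shortest under some tolls is no longer than a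
  toll-free \<open>s\<close>-\<open>t\<close> path while its toll-free part is at least \<open>\<L>(P\<^sub>0)\<close>.\<close>

section \<open>Toll decompositions of a path\<close>

definition flat_blocks :: "('e \<times> 'e list) list \<Rightarrow> 'e list" where
  "flat_blocks xs = concat (map (\<lambda>(e, S). e # S) xs)"

lemma flat_blocks_simps [simp]:
  "flat_blocks [] = []"
  "flat_blocks (x # xs) = fst x # snd x @ flat_blocks xs"
  "flat_blocks (xs @ ys) = flat_blocks xs @ flat_blocks ys"
  by (auto simp: flat_blocks_def split: prod.splits)

lemma flat_blocks_take_drop: "flat_blocks xs = flat_blocks (take k xs) @ flat_blocks (drop k xs)"
  by (metis append_take_drop_id flat_blocks_simps(3))

lemma flat_blocks_drop_nth:
  "k < length xs \<Longrightarrow> flat_blocks (drop k xs) = fst (xs ! k) # snd (xs ! k) @ flat_blocks (drop (Suc k) xs)"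
  by (simp add: Cons_nth_drop_Suc[symmetric])

definition toll_free :: "('v, 'e) tollnet \<Rightarrow> 'e list \<Rightarrow> bool" where
  "toll_free G S \<longleftrightarrow> set S \<inter> tollA G = {}"

text \<open>\<open>S0 @ flat_blocks xs\<close> splits a path into its toll-free part before \<open>\<tau>\<^sub>1\<close> and blocks
  \<open>(\<tau>\<^sub>k, toll-free part between \<tau>\<^sub>k and \<tau>\<^sub>k\<^sub>+\<^sub>1)\<close>.\<close>

definition toll_decomp :: "('v, 'e) tollnet \<Rightarrow> 'e list \<Rightarrow> ('e \<times> 'e list) list \<Rightarrow> bool" where
  "toll_decomp G S0 xs \<longleftrightarrow> toll_free G S0 \<and> (\<forall>p\<in>set xs. fst p \<in> tollA G \<and> toll_free G (snd p))"

definition toll_pos :: "'e list \<Rightarrow> ('e \<times> 'e list) list \<Rightarrow> nat \<Rightarrow> nat" where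
  "toll_pos S0 xs k = length S0 + length (flat_blocks (take k xs))"

text \<open>The toll-free segment leaving \<open>\<tau>\<^sub>a\<close> (leaving \<open>s\<close> for \<open>a = 0\<close>).\<close>

definition seg :: "'e list \<Rightarrow> ('e \<times> 'e list) list \<Rightarrow> nat \<Rightarrow> 'e list" where
  "seg S0 xs a = (if a = 0 then S0 else snd (xs ! (a - 1)))"

lemma tpos_append: "tpos G (A @ B) = tpos G A @ map (\<lambda>n. n + length A) (tpos G B)"
proof -
  have "[0..<length (A @ B)] = [0..<length A] @ map (\<lambda>n. n + length A) [0..<length B]"
    by (simp add: upt_add_eq_append[of 0 "length A" "length B", simplified] map_add_upt add.commute)
  then show ?thesis
    unfolding tpos_def by (auto simp: filter_map o_def nth_append intro!: filter_cong)
qed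

lemma tpos_toll_free: "toll_free G S \<Longrightarrow> tpos G S = []"
  unfolding tpos_def toll_free_def filter_empty_conv using nth_mem by fastforce

lemma tpos_flat_blocks:
  assumes "\<forall>p\<in>set xs. fst p \<in> tollA G \<and> toll_free G (snd p)"
  shows "tpos G (flat_blocks xs) = map (\<lambda>k. length (flat_blocks (take k xs))) [0..<length xs]"
  using assms
proof (induction xs rule: rev_induct)
  case (snoc x xs)
  have "tpos G (fst x # snd x) = [0]"
    using snoc.prems tpos_append[of G "[fst x]" "snd x"] tpos_toll_free[of G "snd x"]
    by (simp add: tpos_def)
  then show ?case
    using snoc by (simp add: tpos_append take_append del: append.simps)
qed (simp add: tpos_def)

lemma tpos_toll_decomp:
  "toll_decomp G S0 xs \<Longrightarrow> tpos G (S0 @ flat_blocks xs) = map (toll_pos S0 xs) [0..<length xs]"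
  unfolding toll_decomp_def toll_pos_def by (simp add: tpos_append tpos_toll_free tpos_flat_blocks)

lemma toll_decomp_take: "toll_decomp G S0 xs \<Longrightarrow> toll_decomp G S0 (take k xs)"
  unfolding toll_decomp_def by (auto dest: in_set_takeD)

lemma exists_toll_decomp: "\<exists>S0 xs. toll_decomp G S0 xs \<and> P = S0 @ flat_blocks xs"
proof (induction P rule: rev_induct)
  case Nil
  show ?case by (intro exI[of _ "[]"]) (simp add: toll_decomp_def toll_free_def)
next
  case (snoc e P)
  then obtain S0 xs where d: "toll_decomp G S0 xs" "P = S0 @ flat_blocks xs" by blast
  consider "e \<in> tollA G" | "e \<notin> tollA G" "xs = []" | "e \<notin> tollA G" "xs \<noteq> []" by blast
  then show ?case
  proof cases
    case 1
    then show ?thesis using d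
      by (intro exI[of _ S0] exI[of _ "xs @ [(e, [])]"]) (auto simp: toll_decomp_def toll_free_def)
  next
    case 2
    then show ?thesis using d
      by (intro exI[of _ "S0 @ [e]"] exI[of _ "[]"]) (auto simp: toll_decomp_def toll_free_def)
  next
    case 3
    define xs' where "xs' = butlast xs @ [(fst (last xs), snd (last xs) @ [e])]"
    have "flat_blocks xs' = flat_blocks (butlast xs @ [last xs]) @ [e]"
      unfolding xs'_def by simp
    then have "P @ [e] = S0 @ flat_blocks xs'"
      using d 3 by simp
    moreover have "toll_decomp G S0 xs'"
      using d 3 unfolding toll_decomp_def toll_free_def xs'_def
      by (auto dest: in_set_butlastD)
    ultimately show ?thesis by blast
  qed
qed

context
  fixes G :: "('v, 'e) tollnet" and S0 :: "'e list" and xs :: "('e \<times> 'e list) list"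
  assumes dec: "toll_decomp G S0 xs"
begin

lemma ntoll_toll_decomp: "ntoll G (S0 @ flat_blocks xs) = length xs"
  by (simp add: ntoll_def tpos_toll_decomp[OF dec])

lemma tpos_toll_decomp_nth: "k < length xs \<Longrightarrow> tpos G (S0 @ flat_blocks xs) ! k = toll_pos S0 xs k"
  by (simp add: tpos_toll_decomp[OF dec])

lemma drop_toll_pos: "drop (toll_pos S0 xs k) (S0 @ flat_blocks xs) = flat_blocks (drop k xs)"
proof -
  have "S0 @ flat_blocks xs = (S0 @ flat_blocks (take k xs)) @ flat_blocks (drop k xs)"
    using flat_blocks_take_drop[of xs k] by simp
  then show ?thesis unfolding toll_pos_def by (metis append_eq_conv_conj length_append)
qed

lemma tau_toll_decomp: "1 \<le> k \<Longrightarrow> k \<le> length xs \<Longrightarrow> tau G (S0 @ flat_blocks xs) k = fst (xs ! (k - 1))"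
proof -
  assume k: "1 \<le> k" "k \<le> length xs"
  have "drop (toll_pos S0 xs (k - 1)) (S0 @ flat_blocks xs) = fst (xs ! (k - 1)) # snd (xs ! (k - 1)) @ flat_blocks (drop k xs)"
    using drop_toll_pos[of "k - 1"] flat_blocks_drop_nth[of "k - 1" xs] k by simp
  then have "(S0 @ flat_blocks xs) ! toll_pos S0 xs (k - 1) = fst (xs ! (k - 1))"
    by (metis Cons_nth_drop_Suc drop_all list.distinct(1) list.inject not_le_imp_less)
  then show ?thesis using k by (simp add: tau_def tpos_toll_decomp_nth)
qed

lemma bef_toll_decomp:
  "1 \<le> b \<Longrightarrow> b \<le> length xs + 1 \<Longrightarrow> bef G (S0 @ flat_blocks xs) b =
     (if b = length xs + 1 then length (S0 @ flat_blocks xs) else toll_pos S0 xs (b - 1))"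
  by (simp add: bef_def tpos_toll_decomp_nth ntoll_toll_decomp)

lemma drop_bef_toll_decomp:
  "1 \<le> b \<Longrightarrow> b \<le> length xs + 1 \<Longrightarrow>
     drop (bef G (S0 @ flat_blocks xs) b) (S0 @ flat_blocks xs) = flat_blocks (drop (b - 1) xs)"
  by (auto simp: bef_toll_decomp drop_toll_pos simp del: drop_append)

lemma take_aft_toll_decomp:
  assumes a: "a \<le> length xs"
  shows "take (aft G (S0 @ flat_blocks xs) a) (S0 @ flat_blocks xs) =
     (if a = 0 then [] else S0 @ flat_blocks (take (a - 1) xs) @ [fst (xs ! (a - 1))])"
proof (cases "a = 0")
  case False
  have "S0 @ flat_blocks xs =
      (S0 @ flat_blocks (take (a - 1) xs) @ [fst (xs ! (a - 1))]) @ snd (xs ! (a - 1)) @ flat_blocks (drop a xs)"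
    using flat_blocks_take_drop[of xs "a - 1"] flat_blocks_drop_nth[of "a - 1" xs] a False by simp
  moreover have "aft G (S0 @ flat_blocks xs) a =
      length (S0 @ flat_blocks (take (a - 1) xs) @ [fst (xs ! (a - 1))])"
    using a False by (simp add: aft_def tpos_toll_decomp_nth toll_pos_def)
  ultimately show ?thesis
    using False by (metis append_eq_conv_conj)
qed (simp add: aft_def)

end

lemma L0_append: "L0 G (A @ B) = L0 G A + L0 G B"
  by (simp add: L0_def plen_def)

lemma L0_Cons: "L0 G (e # A) = arc_cost G (\<lambda>_. 0) e + L0 G A"
  by (simp add: L0_def plen_def)

lemma L0_nonneg: "0 \<le> L0 G A"
  unfolding L0_def plen_def by (rule sum_list_nonneg) (auto simp: arc_cost_def)

lemma arc_cost_toll: "e \<in> tollA G \<Longrightarrow> arc_cost G (\<lambda>_. 0) e = real (c G e)"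
  by (simp add: arc_cost_def)

lemma Ufree_nonneg: "0 \<le> Ufree G u v"
  unfolding Ufree_def by (rule Inf_greatest) (auto simp: L0_nonneg)

lemma Uij_nonneg: "0 \<le> Uij G P i j"
  by (simp add: Uij_def Ufree_nonneg)

lemma Ufree_le: "spath G (freeA G) u Q v \<Longrightarrow> Ufree G u v \<le> ereal (L0 G Q)"
  unfolding Ufree_def by (rule Inf_lower) auto

lemma le_Ufree:
  "(\<And>Q. spath G (freeA G) u Q v \<Longrightarrow> x \<le> ereal (L0 G Q)) \<Longrightarrow> x \<le> Ufree G u v"
  unfolding Ufree_def by (rule Inf_greatest) auto

lemma Ufree_finite_imp_spath: "Ufree G u v \<noteq> \<infinity> \<Longrightarrow> \<exists>Q. spath G (freeA G) u Q v"
  unfolding Ufree_def by (auto simp: top_ereal_def[symmetric])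

lemma Ufree_eq_ups:
  assumes ups: "\<And>u v Q. spath G (freeA G) u Q v \<Longrightarrow> spath G (freeA G) u (ups u v) v \<and> L0 G (ups u v) \<le> L0 G Q"
    and "spath G (freeA G) u Q v"
  shows "Ufree G u v = ereal (L0 G (ups u v))"
  using assms by (intro antisym Ufree_le le_Ufree) auto

lemma Lij_finite:
  assumes "\<And>l. i \<le> l \<Longrightarrow> l < j \<Longrightarrow> Uij G P l (l + 1) \<noteq> \<infinity>"
  shows "\<exists>r. Lij G P i j = ereal r"
proof -
  have "\<exists>r. Uij G P l (l + 1) = ereal r" if "l \<in> {i..<j}" for l
    using assms[of l] that Uij_nonneg[of G P l "l + 1"] by (cases "Uij G P l (l + 1)") auto
  then obtain r where "\<And>l. l \<in> {i..<j} \<Longrightarrow> Uij G P l (l + 1) = ereal (r l)" by metis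
  then have "(\<Sum>l\<in>{i..<j}. Uij G P l (l + 1)) = ereal (\<Sum>l\<in>{i..<j}. r l)"
    by (simp add: sum_ereal)
  then show ?thesis unfolding Lij_def by auto
qed

section \<open>The invariant of MaxRev\<close>

definition tsum :: "(nat \<Rightarrow> real) \<Rightarrow> nat \<Rightarrow> nat \<Rightarrow> real" where
  "tsum t a b = (\<Sum>x\<in>{a + 1..<b}. t x)"

definition Dij :: "('v, 'e) tollnet \<Rightarrow> 'e list \<Rightarrow> nat \<Rightarrow> nat \<Rightarrow> ereal" where
  "Dij G P i j = Uij G P i j - Lij G P i j"

lemma mr_obj_eq: "mr_obj G P t k (i, j) = Dij G P i j - ereal (tsum t i k)"
  by (simp add: mr_obj_def Dij_def tsum_def)

lemma tsum_upd: "tsum (t(k := v)) a b = tsum t a b + (if a < k \<and> k < b then v - t k else 0)"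
proof (cases "a < k \<and> k < b")
  case True
  then have k: "k \<in> {a + 1..<b}" by auto
  show ?thesis
    using True sum.remove[OF _ k, of "t(k := v)"] sum.remove[OF _ k, of t]
    by (simp add: tsum_def sum.cong[of _ _ "t(k := v)" t])
qed (auto simp: tsum_def intro!: sum.cong)

lemma tsum_zero_tail: "\<forall>l\<ge>k. t l = 0 \<Longrightarrow> k \<le> j \<Longrightarrow> tsum t i j = tsum t i k"
proof -
  assume z: "\<forall>l\<ge>k. t l = 0" and kj: "k \<le> j"
  show ?thesis
  proof (cases "i + 1 \<le> k")
    case True
    then have "sum t {i + 1..<j} = sum t {i + 1..<k} + sum t {k..<j}"
      using kj by (intro sum.atLeastLessThan_concat[symmetric]) auto
    then show ?thesis using z by (simp add: tsum_def)
  qed (use z in \<open>simp add: tsum_def\<close>)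
qed

text \<open>\<open>\<kappa>\<close> is the iteration of MaxRev that recorded the pair \<open>pr l\<close>.\<close>

definition mr_pair_ok :: "('v, 'e) tollnet \<Rightarrow> 'e list \<Rightarrow> nat \<Rightarrow> (nat \<Rightarrow> real) \<Rightarrow> (nat \<Rightarrow> nat \<times> nat) \<Rightarrow> nat \<Rightarrow> bool" where
  "mr_pair_ok G P k t pr l \<longleftrightarrow> (\<exists>\<kappa>. 1 \<le> \<kappa> \<and> \<kappa> \<le> l \<and> fst (pr l) < \<kappa> \<and> l < snd (pr l) \<and> snd (pr l) \<le> k
     \<and> (\<forall>l'. 1 \<le> l' \<and> l' < \<kappa> \<longrightarrow> snd (pr l') \<le> \<kappa>) \<and> (\<forall>l'. \<kappa> < l' \<and> l' < snd (pr l) \<longrightarrow> t l' = 0)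
     \<and> ereal (tsum t (fst (pr l)) (snd (pr l))) = Dij G P (fst (pr l)) (snd (pr l)))"

definition mr_inv :: "('v, 'e) tollnet \<Rightarrow> 'e list \<Rightarrow> nat \<Rightarrow> (nat \<Rightarrow> real) \<Rightarrow> (nat \<Rightarrow> nat \<times> nat) \<Rightarrow> bool" where
  "mr_inv G P k t pr \<longleftrightarrow> 1 \<le> k \<and> k \<le> ntoll G P + 1 \<and> (\<forall>l\<ge>k. t l = 0) \<and> (\<forall>l. 0 \<le> t l)
     \<and> (\<forall>i j. i < j \<and> j \<le> ntoll G P + 1 \<longrightarrow> ereal (tsum t i j) \<le> Dij G P i j)
     \<and> (\<forall>l. 1 \<le> l \<and> l < k \<longrightarrow> mr_pair_ok G P k t pr l)"

lemma mr_argmin: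
  fixes t :: "nat \<Rightarrow> real"
  assumes "1 \<le> k" "k < ntoll G P + 1"
  defines "M \<equiv> mr_min G P t k" and "i' \<equiv> mr_i G P t k" and "j' \<equiv> mr_j G P t k"
  shows "i' < k \<and> k < j' \<and> j' \<le> ntoll G P + 1 \<and> mr_obj G P t k (i', j') = M
     \<and> (\<forall>p\<in>mr_pairs G P k. M \<le> mr_obj G P t k p)"
proof -
  let ?m = "ntoll G P" and ?pairs = "mr_pairs G P k" and ?obj = "mr_obj G P t k"
  have fp: "finite ?pairs"
    by (rule finite_subset[of _ "{..<k} \<times> {..?m + 1}"]) (auto simp: mr_pairs_def)
  have "(0, ?m + 1) \<in> ?pairs" using assms by (auto simp: mr_pairs_def)
  then have Min: "M \<in> ?obj ` ?pairs"
    unfolding M_def mr_min_def using fp by (intro Min_in) auto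
  define J where "J = {j. \<exists>i. (i, j) \<in> ?pairs \<and> ?obj (i, j) = M}"
  have "finite J" unfolding J_def
    by (rule finite_subset[of _ "{..?m + 1}"]) (auto simp: mr_pairs_def)
  moreover have "J \<noteq> {}" using Min unfolding J_def by force
  ultimately have "j' \<in> J" unfolding j'_def mr_j_def J_def M_def by (intro Max_in)
  define I where "I = {i. (i, j') \<in> ?pairs \<and> ?obj (i, j') = M}"
  have "finite I" unfolding I_def
    by (rule finite_subset[of _ "{..<k}"]) (auto simp: mr_pairs_def)
  moreover have "I \<noteq> {}" using \<open>j' \<in> J\<close> unfolding J_def I_def by auto
  ultimately have "i' \<in> I" unfolding i'_def mr_i_def I_def M_def j'_def by (intro Min_in)
  moreover have "\<forall>p\<in>?pairs. M \<le> ?obj p"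
    unfolding M_def mr_min_def using fp by auto
  ultimately show ?thesis unfolding I_def mr_pairs_def by auto
qed

lemma mr_constraints_step:
  assumes C: "\<forall>i j. i < j \<and> j \<le> ntoll G P + 1 \<longrightarrow> ereal (tsum t i j) \<le> Dij G P i j"
    and z: "\<forall>l\<ge>k. t l = 0"
    and min: "\<forall>p\<in>mr_pairs G P k. ereal tk \<le> mr_obj G P t k p"
    and ij: "i < j" "j \<le> ntoll G P + 1"
  shows "ereal (tsum (t(k := tk)) i j) \<le> Dij G P i j"
proof (cases "i < k \<and> k < j")
  case True
  then have "(i, j) \<in> mr_pairs G P k" using ij by (simp add: mr_pairs_def)
  then have "ereal tk \<le> Dij G P i j - ereal (tsum t i k)"
    using min mr_obj_eq[of G P t k i j] by metis
  moreover have "tsum t i j = tsum t i k" using tsum_zero_tail[OF z, of j i] True by simp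
  ultimately show ?thesis
    using True z by (cases "Dij G P i j") (simp_all add: tsum_upd)
qed (use C ij z in \<open>auto simp: tsum_upd\<close>)

lemma mr_tight_step:
  assumes z: "\<forall>l\<ge>k. t l = 0" and "i < k" "k < j"
    and obj: "mr_obj G P t k (i, j) = ereal tk"
  shows "ereal (tsum (t(k := tk)) i j) = Dij G P i j"
proof -
  have "ereal tk = Dij G P i j - ereal (tsum t i k)" using obj mr_obj_eq by metis
  moreover have "tsum t i j = tsum t i k" using tsum_zero_tail[OF z, of j i] assms by simp
  ultimately show ?thesis
    using assms by (cases "Dij G P i j") (simp_all add: tsum_upd)
qed

lemma mr_pair_ok_step:
  assumes PR: "\<forall>l. 1 \<le> l \<and> l < k \<longrightarrow> mr_pair_ok G P k t pr l"
    and z: "\<forall>l\<ge>k. t l = 0" and k: "1 \<le> k" "i' < k" "k < j'"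
    and tight: "ereal (tsum (t(k := tk)) i' j') = Dij G P i' j'"
    and l: "1 \<le> l" "l < j'"
  shows "mr_pair_ok G P j' (t(k := tk)) (\<lambda>l. if k \<le> l \<and> l < j' then (i', j') else pr l) l"
    (is "mr_pair_ok G P j' ?t ?pr l")
proof (cases "k \<le> l")
  case True
  have "snd (?pr l') \<le> k" if "1 \<le> l'" "l' < k" for l'
    using PR that unfolding mr_pair_ok_def by auto
  moreover have "?t l' = 0" if "k < l'" "l' < j'" for l'
    using z that by simp
  ultimately show ?thesis unfolding mr_pair_ok_def
    by (intro exI[of _ k]) (use True k l tight in auto)
next
  case False
  from PR False l obtain \<kappa> where kap: "1 \<le> \<kappa>" "\<kappa> \<le> l" "fst (pr l) < \<kappa>" "l < snd (pr l)" "snd (pr l) \<le> k"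
      "\<forall>l'. 1 \<le> l' \<and> l' < \<kappa> \<longrightarrow> snd (pr l') \<le> \<kappa>" "\<forall>l'. \<kappa> < l' \<and> l' < snd (pr l) \<longrightarrow> t l' = 0"
      "ereal (tsum t (fst (pr l)) (snd (pr l))) = Dij G P (fst (pr l)) (snd (pr l))"
    unfolding mr_pair_ok_def by auto
  have "tsum ?t (fst (pr l)) (snd (pr l)) = tsum t (fst (pr l)) (snd (pr l))"
    using kap by (simp add: tsum_upd)
  then show ?thesis unfolding mr_pair_ok_def
    by (intro exI[of _ \<kappa>]) (use kap False k in auto)
qed

context
  fixes G :: "('v, 'e) tollnet" and P :: "'e list"
  assumes fin: "\<And>l. l \<le> ntoll G P \<Longrightarrow> Uij G P l (l + 1) \<noteq> \<infinity>"
    and L_le_U: "\<And>i j. i < j \<Longrightarrow> j \<le> ntoll G P + 1 \<Longrightarrow> Lij G P i j \<le> Uij G P i j"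
    and U_st: "Uij G P 0 (ntoll G P + 1) \<noteq> \<infinity>"
begin

lemma Lij_real: "j \<le> ntoll G P + 1 \<Longrightarrow> \<exists>r. Lij G P i j = ereal r"
  using fin by (intro Lij_finite) auto

lemma mr_inv_init: "mr_inv G P 1 (\<lambda>_. 0) (\<lambda>_. (0, 0))"
proof -
  have "0 \<le> Dij G P i j" if "i < j" "j \<le> ntoll G P + 1" for i j
    using L_le_U[OF that] Lij_real[OF that(2), of i]
    by (cases "Uij G P i j") (auto simp: Dij_def)
  then show ?thesis by (auto simp: mr_inv_def tsum_def zero_ereal_def[symmetric])
qed

lemma mr_min_real:
  assumes inv: "mr_inv G P k t pr" and k: "k < ntoll G P + 1"
  shows "\<exists>tk\<ge>0. mr_min G P t k = ereal tk"
proof -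
  let ?M = "mr_min G P t k" and ?m = "ntoll G P"
  have k1: "1 \<le> k" and z: "\<forall>l\<ge>k. t l = 0"
    and C: "\<forall>i j. i < j \<and> j \<le> ?m + 1 \<longrightarrow> ereal (tsum t i j) \<le> Dij G P i j"
    using inv unfolding mr_inv_def by auto
  have arg: "(mr_i G P t k, mr_j G P t k) \<in> mr_pairs G P k" "mr_obj G P t k (mr_i G P t k, mr_j G P t k) = ?M"
    "\<forall>p\<in>mr_pairs G P k. ?M \<le> mr_obj G P t k p"
    using mr_argmin[OF k1 k, of t] by (auto simp: mr_pairs_def)
  have "0 \<le> mr_obj G P t k (i, j)" if "(i, j) \<in> mr_pairs G P k" for i j
  proof -
    have "i < j" "j \<le> ?m + 1" "k \<le> j" using that by (auto simp: mr_pairs_def)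
    then have "ereal (tsum t i k) \<le> Dij G P i j"
      using C tsum_zero_tail[OF z, of j i] by metis
    then show ?thesis unfolding mr_obj_eq by (cases "Dij G P i j") auto
  qed
  then have "0 \<le> ?M" using arg by (metis surj_pair)
  moreover have "?M \<le> mr_obj G P t k (0, ?m + 1)" using arg k1 k by (auto simp: mr_pairs_def)
  moreover have "mr_obj G P t k (0, ?m + 1) \<noteq> \<infinity>"
    using U_st Lij_real[of "?m + 1" 0] unfolding mr_obj_eq Dij_def
    by (cases "Uij G P 0 (?m + 1)") auto
  ultimately show ?thesis by (cases ?M) auto
qed

lemma mr_step:
  assumes inv: "mr_inv G P k t pr" and k: "k < ntoll G P + 1"
  defines "j' \<equiv> mr_j G P t k" and "i' \<equiv> mr_i G P t k"
  defines "t' \<equiv> (\<lambda>l. if l = k then real_of_ereal (mr_min G P t k) else if k < l \<and> l < j' then 0 else t l)"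
  defines "pr' \<equiv> (\<lambda>l. if k \<le> l \<and> l < j' then (i', j') else pr l)"
  shows "mr_inv G P j' t' pr' \<and> k < j'"
proof -
  have k1: "1 \<le> k" and z: "\<forall>l\<ge>k. t l = 0" and tnn: "\<forall>l. 0 \<le> t l"
    and C: "\<forall>i j. i < j \<and> j \<le> ntoll G P + 1 \<longrightarrow> ereal (tsum t i j) \<le> Dij G P i j"
    and PR: "\<forall>l. 1 \<le> l \<and> l < k \<longrightarrow> mr_pair_ok G P k t pr l"
    using inv unfolding mr_inv_def by auto
  obtain tk where tk: "0 \<le> tk" "mr_min G P t k = ereal tk" using mr_min_real[OF inv k] by blast
  have arg: "i' < k" "k < j'" "j' \<le> ntoll G P + 1" "mr_obj G P t k (i', j') = ereal tk"
    "\<forall>p\<in>mr_pairs G P k. ereal tk \<le> mr_obj G P t k p"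
    using mr_argmin[OF k1 k, of t] tk unfolding i'_def j'_def by auto
  have t': "t' = t(k := tk)" unfolding t'_def using z tk by (auto simp: fun_eq_iff)
  have tight: "ereal (tsum t' i' j') = Dij G P i' j'"
    unfolding t' using mr_tight_step[OF z arg(1,2,4)] .
  have "mr_inv G P j' t' pr'"
    unfolding mr_inv_def
  proof (intro conjI allI impI)
    show "1 \<le> j'" "j' \<le> ntoll G P + 1" using arg k1 by auto
    show "t' l = 0" if "j' \<le> l" for l using that arg z unfolding t' by auto
    show "0 \<le> t' l" for l using tnn tk unfolding t' by auto
    show "ereal (tsum t' i j) \<le> Dij G P i j" if "i < j \<and> j \<le> ntoll G P + 1" for i j
      unfolding t' using mr_constraints_step[OF C z arg(5)] that by blast
    show "mr_pair_ok G P j' t' pr' l" if "1 \<le> l \<and> l < j'" for l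
      unfolding t' pr'_def using mr_pair_ok_step[OF PR z k1 arg(1,2) tight[unfolded t']] that by blast
  qed
  then show ?thesis using arg by auto
qed

lemma mr_loop_inv:
  "mr_inv G P k t pr \<Longrightarrow> ntoll G P + 1 - k \<le> n \<Longrightarrow>
     mr_inv G P (ntoll G P + 1) (fst (mr_loop G P n k t pr)) (snd (mr_loop G P n k t pr))"
proof (induction n arbitrary: k t pr)
  case 0
  then have "k = ntoll G P + 1" unfolding mr_inv_def by auto
  then show ?case using 0 by simp
next
  case (Suc n)
  show ?case
  proof (cases "k < ntoll G P + 1")
    case True
    then show ?thesis
      using mr_step[OF Suc.prems(1) True] Suc.prems(2) Suc.IH by (auto simp: Let_def)
  next
    case False
    then have "k = ntoll G P + 1" using Suc.prems unfolding mr_inv_def by auto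
    then show ?thesis using Suc.prems by simp
  qed
qed

lemma maxrev_inv: "mr_inv G P (ntoll G P + 1) (fst (maxrev G P)) (snd (maxrev G P))"
  unfolding maxrev_def by (rule mr_loop_inv[OF mr_inv_init]) simp

end

section \<open>The pairs recorded by TollPartition\<close>

fun interval_chain :: "(nat \<times> nat) list \<Rightarrow> bool" where
  "interval_chain [] = True"
| "interval_chain [p] = (fst p < snd p)"
| "interval_chain (p # q # r) = (fst p < snd p \<and> snd p \<le> fst q \<and> interval_chain (q # r))"

lemma interval_chain_Cons:
  "interval_chain (p # R) \<longleftrightarrow> fst p < snd p \<and> interval_chain R \<and> (R \<noteq> [] \<longrightarrow> snd p \<le> fst (hd R))"
  by (cases R) auto

lemma interval_chain_lt: "interval_chain A \<Longrightarrow> p \<in> set A \<Longrightarrow> fst p < snd p"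
  by (induction A rule: interval_chain.induct) auto

lemma interval_chain_Cons_le: "interval_chain (p # R) \<Longrightarrow> q \<in> set R \<Longrightarrow> snd p \<le> fst q"
proof (induction R arbitrary: p)
  case (Cons r R)
  then have "snd p \<le> fst r" "interval_chain (r # R)" "fst r < snd r" by (auto simp: interval_chain_Cons)
  then show ?case using Cons.IH[of r] Cons.prems by (cases "q = r") auto
qed simp

lemma interval_chain_nth_le:
  "interval_chain A \<Longrightarrow> i < j \<Longrightarrow> j < length A \<Longrightarrow> snd (A ! i) \<le> fst (A ! j)"
proof (induction A arbitrary: i j)
  case (Cons p R)
  then obtain j' where j: "j = Suc j'" by (cases j) auto
  show ?case
  proof (cases i)
    case 0
    then show ?thesis using interval_chain_Cons_le[of p R "R ! j'"] Cons.prems j by simp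
  next
    case (Suc i')
    then show ?thesis using Cons.IH[of i' j'] Cons.prems j by (simp add: interval_chain_Cons)
  qed
qed simp

lemma interval_chain_disjoint:
  assumes "interval_chain A" "p \<in> set A" "q \<in> set A" "p \<noteq> q"
  shows "snd p \<le> fst q \<or> snd q \<le> fst p"
proof -
  obtain i j where "i < length A" "j < length A" "A ! i = p" "A ! j = q"
    using assms by (auto simp: in_set_conv_nth)
  then show ?thesis
    using assms interval_chain_nth_le[OF assms(1), of i j] interval_chain_nth_le[OF assms(1), of j i]
    by (cases i j rule: linorder_cases) auto
qed

definition covered :: "(nat \<times> nat) list \<Rightarrow> nat \<Rightarrow> bool" where
  "covered A x \<longleftrightarrow> (\<exists>p\<in>set A. fst p < x \<and> x < snd p)"

text \<open>This makes the even- and the odd-numbered pairs each a chain of disjoint intervals.\<close>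

definition alt_disjoint :: "(nat \<times> nat) list \<Rightarrow> bool" where
  "alt_disjoint xs \<longleftrightarrow> (\<forall>h. h + 2 < length xs \<longrightarrow> snd (xs ! h) \<le> fst (xs ! (h + 2)))"

lemma alt_disjoint_tl: "alt_disjoint (x # xs) \<Longrightarrow> alt_disjoint xs"
  unfolding alt_disjoint_def by (auto dest: spec[of _ "Suc _"])

lemma nths_even_Cons: "nths (x # xs) {n. even n} = x # nths xs {n. odd n}"
  by (simp add: nths_Cons)

lemma nths_odd_Cons: "nths (x # xs) {n. odd n} = nths xs {n. even n}"
  by (simp add: nths_Cons)

lemma alt_disjoint_nths:
  assumes "alt_disjoint xs" "\<forall>p\<in>set xs. fst p < snd p"
  shows "interval_chain (nths xs {n. even n}) \<and> interval_chain (nths xs {n. odd n})"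
  using assms
proof (induction xs)
  case (Cons x xs)
  have IH: "interval_chain (nths xs {n. even n})" "interval_chain (nths xs {n. odd n})"
    using Cons alt_disjoint_tl by auto
  have "interval_chain (x # nths xs {n. odd n})"
  proof (cases "length xs \<le> 1")
    case True
    then have "nths xs {n. odd n} = []" by (cases xs) (auto simp: nths_odd_Cons)
    then show ?thesis using Cons.prems by simp
  next
    case False
    then obtain y z v where xs: "xs = y # z # v"
      by (cases xs; cases "tl xs") auto
    have "snd x \<le> fst z" using Cons.prems(1) unfolding xs alt_disjoint_def by (auto dest: spec[of _ 0])
    then show ?thesis using IH(2) Cons.prems(2) by (simp add: xs nths_odd_Cons nths_even_Cons)
  qed
  then show ?case using IH by (simp add: nths_odd_Cons nths_even_Cons)
qed simp

lemma sum_list_nths_even_odd: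
  fixes f :: "_ \<Rightarrow> real"
  shows "sum_list (map f (nths xs {n. even n})) + sum_list (map f (nths xs {n. odd n})) = sum_list (map f xs)"
  by (induction xs) (simp_all add: nths_odd_Cons nths_even_Cons)

lemma set_nths_even_odd: "set (nths xs {n. even n}) \<union> set (nths xs {n. odd n}) = set xs"
  by (induction xs) (auto simp: nths_odd_Cons nths_even_Cons)

lemma nths_even_nonempty: "xs \<noteq> [] \<Longrightarrow> nths xs {n. even n} \<noteq> []"
  by (cases xs) (auto simp: nths_even_Cons)

lemma nths_odd_nonempty: "2 \<le> length xs \<Longrightarrow> nths xs {n. odd n} \<noteq> []"
proof (cases xs)
  case (Cons y w)
  assume "2 \<le> length xs"
  then have "w \<noteq> []" using Cons by auto
  then show ?thesis unfolding Cons nths_odd_Cons by (rule nths_even_nonempty)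
qed simp

context
  fixes G :: "('v, 'e) tollnet" and P :: "'e list" and t pr
  assumes inv: "mr_inv G P (ntoll G P + 1) t pr"
begin

lemma mr_inv_pair_ok: "1 \<le> l \<Longrightarrow> l \<le> ntoll G P \<Longrightarrow> mr_pair_ok G P (ntoll G P + 1) t pr l"
  using inv unfolding mr_inv_def by auto

lemma mr_inv_fst_less: "1 \<le> l \<Longrightarrow> l \<le> ntoll G P \<Longrightarrow> fst (pr l) < l"
  using mr_inv_pair_ok unfolding mr_pair_ok_def by fastforce

lemma mr_inv_tsum_pair:
  assumes l: "1 \<le> l" "l \<le> ntoll G P"
  shows "tsum t (fst (pr l)) (snd (pr l)) = (\<Sum>x\<in>{fst (pr l) + 1..l}. t x)"
proof -
  obtain \<kappa> where k: "\<kappa> \<le> l" "fst (pr l) < \<kappa>" "l < snd (pr l)"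
     "\<forall>l'. \<kappa> < l' \<and> l' < snd (pr l) \<longrightarrow> t l' = 0"
    using mr_inv_pair_ok[OF l] unfolding mr_pair_ok_def by blast
  have "sum t {fst (pr l) + 1..<snd (pr l)} = sum t {fst (pr l) + 1..<l + 1} + sum t {l + 1..<snd (pr l)}"
    using k by (intro sum.atLeastLessThan_concat[symmetric]) auto
  moreover have "sum t {l + 1..<snd (pr l)} = 0" using k by (auto intro!: sum.neutral)
  ultimately show ?thesis unfolding tsum_def by (simp add: atLeastLessThanSuc_atLeastAtMost)
qed

lemma tp_rec_tsum:
  "l \<le> ntoll G P \<Longrightarrow> l < n \<Longrightarrow>
     sum_list (map (\<lambda>p. tsum t (fst p) (snd p)) (tp_rec pr n l)) = (\<Sum>x\<in>{1..l}. t x)"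
proof (induction n arbitrary: l)
  case (Suc n)
  show ?case
  proof (cases "l = 0")
    case False
    let ?a = "fst (pr l)"
    have a: "?a < l" using mr_inv_fst_less[of l] False Suc.prems by auto
    have "sum t {1..<?a + 1} + sum t {?a + 1..<l + 1} = sum t {1..<l + 1}"
      using a by (intro sum.atLeastLessThan_concat) auto
    then show ?thesis
      using False Suc.IH[of ?a] a Suc.prems mr_inv_tsum_pair[of l]
      by (simp add: atLeastLessThanSuc_atLeastAtMost)
  qed simp
qed simp

lemma tp_rec_covers:
  "l \<le> ntoll G P \<Longrightarrow> l < n \<Longrightarrow> 1 \<le> x \<Longrightarrow> x \<le> l \<Longrightarrow> covered (tp_rec pr n l) x"
proof (induction n arbitrary: l)
  case (Suc n)
  have l: "l \<noteq> 0" using Suc.prems by auto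
  have a: "fst (pr l) < l" using mr_inv_fst_less[of l] l Suc.prems by auto
  have b: "l < snd (pr l)" using mr_inv_pair_ok[of l] l Suc.prems unfolding mr_pair_ok_def by auto
  show ?case
  proof (cases "x \<le> fst (pr l)")
    case True
    then show ?thesis using Suc.IH[of "fst (pr l)"] a Suc.prems l by (simp add: covered_def)
  next
    case False
    then show ?thesis using l b Suc.prems by (auto simp: covered_def)
  qed
qed simp

lemma tp_rec_pair:
  "l \<le> ntoll G P \<Longrightarrow> p \<in> set (tp_rec pr n l) \<Longrightarrow>
     fst p + 1 < snd p \<and> snd p \<le> ntoll G P + 1 \<and> ereal (tsum t (fst p) (snd p)) = Dij G P (fst p) (snd p)"
proof (induction n arbitrary: l)
  case (Suc n)
  have l: "l \<noteq> 0" using Suc.prems by (auto split: if_splits)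
  have a: "fst (pr l) < l" using mr_inv_fst_less[of l] l Suc.prems by auto
  show ?case
  proof (cases "p = pr l")
    case True
    then show ?thesis using mr_inv_pair_ok[of l] l Suc.prems unfolding mr_pair_ok_def by auto
  next
    case False
    then show ?thesis using Suc.IH[of "fst (pr l)"] a Suc.prems l by auto
  qed
qed simp

text \<open>The list produced by \<open>tp_rec\<close> runs backwards, so the disjointness of pairs two apart
  reads with the indices swapped.\<close>

lemma tp_rec_alt_disjoint:
  "l \<le> ntoll G P \<Longrightarrow> h + 2 < length (tp_rec pr n l) \<Longrightarrow>
     snd (tp_rec pr n l ! (h + 2)) \<le> fst (tp_rec pr n l ! h)"
proof (induction n arbitrary: l h)
  case (Suc n)
  let ?a = "fst (pr l)"
  let ?cs = "tp_rec pr n ?a"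
  have l: "l \<noteq> 0" using Suc.prems by (auto split: if_splits)
  have a: "?a < l" using mr_inv_fst_less[of l] l Suc.prems by auto
  have cs: "tp_rec pr (Suc n) l = pr l # ?cs" using l by simp
  show ?case
  proof (cases h)
    case 0
    obtain n' where n: "n = Suc n'" and a0: "?a \<noteq> 0"
      using Suc.prems cs by (cases n) (auto split: if_splits)
    have cs': "?cs = pr ?a # tp_rec pr n' (fst (pr ?a))" using n a0 by simp
    have b0: "fst (pr ?a) \<noteq> 0" and c1: "?cs ! 1 = pr (fst (pr ?a))"
      using Suc.prems cs cs' 0 by (cases n'; auto split: if_splits)+
    obtain \<kappa> where k: "fst (pr ?a) < \<kappa>" "\<kappa> \<le> ?a" "\<forall>l'. 1 \<le> l' \<and> l' < \<kappa> \<longrightarrow> snd (pr l') \<le> \<kappa>"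
      using mr_inv_pair_ok[of ?a] a0 a Suc.prems unfolding mr_pair_ok_def by auto
    have "snd (pr (fst (pr ?a))) \<le> \<kappa>" using k b0 by simp
    then show ?thesis using k(2) c1 cs 0 by (simp add: numeral_2_eq_2)
  next
    case (Suc h')
    then show ?thesis using Suc.IH[of ?a h'] a Suc.prems cs by simp
  qed
qed simp

end

lemma alt_disjoint_rev:
  assumes "\<And>h. h + 2 < length xs \<Longrightarrow> snd (xs ! (h + 2)) \<le> fst (xs ! h)"
  shows "alt_disjoint (rev xs)"
  unfolding alt_disjoint_def
proof (intro allI impI)
  fix h assume h: "h + 2 < length (rev xs)"
  let ?g = "length xs - Suc (Suc (Suc h))"
  have "length xs - Suc h = ?g + 2" using h by auto
  then show "snd (rev xs ! h) \<le> fst (rev xs ! (h + 2))"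
    using assms[of ?g] h by (simp add: rev_nth)
qed

context
  fixes G :: "('v, 'e) tollnet" and P :: "'e list"
  assumes fin: "\<And>l. l \<le> ntoll G P \<Longrightarrow> Uij G P l (l + 1) \<noteq> \<infinity>"
    and L_le_U: "\<And>i j. i < j \<Longrightarrow> j \<le> ntoll G P + 1 \<Longrightarrow> Lij G P i j \<le> Uij G P i j"
    and U_st: "Uij G P 0 (ntoll G P + 1) \<noteq> \<infinity>"
begin

lemmas maxrev_inv' = maxrev_inv[OF fin L_le_U U_st]

lemma maxrev_nonneg: "0 \<le> fst (maxrev G P) l"
  using maxrev_inv' unfolding mr_inv_def by auto

lemma maxrev_feasible:
  "i < j \<Longrightarrow> j \<le> ntoll G P + 1 \<Longrightarrow> ereal (tsum (fst (maxrev G P)) i j) \<le> Dij G P i j"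
  using maxrev_inv' unfolding mr_inv_def by auto

lemma VP_nonneg: "0 \<le> VP G P"
  unfolding VP_def by (intro sum_nonneg maxrev_nonneg)

lemma tp_pairs_tsum:
  "sum_list (map (\<lambda>p. tsum (fst (maxrev G P)) (fst p) (snd p)) (tp_pairs G P)) = VP G P"
  using tp_rec_tsum[OF maxrev_inv', of "ntoll G P" "ntoll G P + 1"]
  by (simp add: tp_pairs_def VP_def rev_map[symmetric] sum_list_rev)

lemma tp_pairs_pair:
  "p \<in> set (tp_pairs G P) \<Longrightarrow> fst p + 1 < snd p \<and> snd p \<le> ntoll G P + 1
     \<and> ereal (tsum (fst (maxrev G P)) (fst p) (snd p)) = Dij G P (fst p) (snd p)"
  using tp_rec_pair[OF maxrev_inv', of "ntoll G P" p "ntoll G P + 1"]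
  by (simp add: tp_pairs_def del: tp_rec.simps)

lemma tp_pairs_alt_disjoint: "alt_disjoint (tp_pairs G P)"
  unfolding tp_pairs_def by (rule alt_disjoint_rev) (rule tp_rec_alt_disjoint[OF maxrev_inv']; simp)

lemma tp_pairs_covered: "1 \<le> x \<Longrightarrow> x \<le> ntoll G P \<Longrightarrow> covered (tp_pairs G P) x"
  using tp_rec_covers[OF maxrev_inv', of "ntoll G P" "ntoll G P + 1" x]
  by (simp add: tp_pairs_def covered_def)

text \<open>If the revenue falls short of \<open>U\<^sub>0\<^sub>,\<^sub>m\<^sub>+\<^sub>1 - L\<^sub>0\<^sub>,\<^sub>m\<^sub>+\<^sub>1\<close>, the pair recorded for \<open>\<tau>\<^sub>m\<close>
  does not start at \<open>s\<close>, so TollPartition records a second pair.\<close>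

lemma tp_pairs_two:
  assumes m: "1 \<le> ntoll G P" and VP: "ereal (VP G P) \<noteq> Dij G P 0 (ntoll G P + 1)"
  shows "2 \<le> ntoll G P \<and> 2 \<le> length (tp_pairs G P)"
proof -
  let ?m = "ntoll G P" and ?pr = "snd (maxrev G P)"
  have cs: "tp_rec ?pr (?m + 1) ?m = ?pr ?m # tp_rec ?pr ?m (fst (?pr ?m))"
    using m by simp
  have a0: "fst (?pr ?m) \<noteq> 0"
  proof
    assume a: "fst (?pr ?m) = 0"
    have "snd (?pr ?m) = ?m + 1"
      using mr_inv_pair_ok[OF maxrev_inv', of ?m] m unfolding mr_pair_ok_def by auto
    moreover have "tp_rec ?pr ?m 0 = []" using m by (cases ?m) auto
    ultimately have "tp_pairs G P = [(0, ?m + 1)]"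
      using cs a by (simp add: tp_pairs_def prod_eq_iff)
    then show False
      using tp_pairs_tsum tp_pairs_pair[of "(0, ?m + 1)"] VP by simp
  qed
  then have "2 \<le> ?m" using mr_inv_fst_less[OF maxrev_inv', of ?m] m by simp
  moreover have "2 \<le> length (tp_pairs G P)"
    using cs a0 m by (cases ?m) (auto simp: tp_pairs_def)
  ultimately show ?thesis by simp
qed

end

definition covered_sum :: "(nat \<times> nat) list \<Rightarrow> (nat \<Rightarrow> real) \<Rightarrow> nat \<Rightarrow> real" where
  "covered_sum B t y = (\<Sum>x<y. if covered B x then t x else 0)"

lemma covered_sum_diff:
  assumes "i \<le> j" "\<not> covered B i"
  shows "covered_sum B t j - covered_sum B t i = (\<Sum>x\<in>{i + 1..<j}. if covered B x then t x else 0)"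
proof -
  have "(\<Sum>x<i. if covered B x then t x else 0) + (\<Sum>x\<in>{i..<j}. if covered B x then t x else 0)
     = (\<Sum>x<j. if covered B x then t x else 0)"
    using assms(1) by (simp add: lessThan_atLeast0 sum.atLeastLessThan_concat)
  moreover have "(\<Sum>x\<in>{i..<j}. if covered B x then t x else 0) = (\<Sum>x\<in>{i + 1..<j}. if covered B x then t x else 0)"
    using assms by (cases "i < j") (simp_all add: sum.atLeast_Suc_lessThan)
  ultimately show ?thesis unfolding covered_sum_def by simp
qed

lemma covered_sum_diff_le:
  assumes "i \<le> j" "\<not> covered B i" "\<forall>l. 0 \<le> t l"
  shows "covered_sum B t j - covered_sum B t i \<le> tsum t i j"
proof -
  have "(\<Sum>x\<in>{i + 1..<j}. if covered B x then t x else 0) \<le> tsum t i j"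
    unfolding tsum_def using assms(3) by (intro sum_mono) auto
  then show ?thesis using covered_sum_diff[OF assms(1,2)] by simp
qed

lemma covered_sum_diff_pair:
  assumes "(i, j) \<in> set B" "i \<le> j" "\<not> covered B i"
  shows "covered_sum B t j - covered_sum B t i = tsum t i j"
proof -
  have "(\<Sum>x\<in>{i + 1..<j}. if covered B x then t x else 0) = tsum t i j"
    unfolding tsum_def using assms(1) by (intro sum.cong) (auto simp: covered_def)
  then show ?thesis using covered_sum_diff[OF assms(2,3)] by simp
qed

lemma covered_sum_eq: "interval_chain B \<Longrightarrow> \<forall>p\<in>set B. snd p \<le> n \<Longrightarrow>
  covered_sum B t n = sum_list (map (\<lambda>p. tsum t (fst p) (snd p)) B)"
proof (induction B)
  case Nil then show ?case by (simp add: covered_sum_def covered_def)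
next
  case (Cons p R)
  have R: "interval_chain R" using Cons.prems by (simp add: interval_chain_Cons)
  have Rge: "\<And>q. q \<in> set R \<Longrightarrow> snd p \<le> fst q" using interval_chain_Cons_le[of p R] Cons.prems by auto
  have split: "(if covered (p # R) x then t x else 0) =
      (if fst p < x \<and> x < snd p then t x else 0) + (if covered R x then t x else 0)" for x
  proof (cases "fst p < x \<and> x < snd p")
    case True
    then have "\<not> covered R x" using Rge unfolding covered_def by force
    moreover have "covered (p # R) x" using True unfolding covered_def by auto
    ultimately show ?thesis using True by simp
  next
    case False
    then have "covered (p # R) x \<longleftrightarrow> covered R x" unfolding covered_def by auto
    then show ?thesis using False by auto
  qed
  have "covered_sum (p # R) t n = (\<Sum>x<n. if fst p < x \<and> x < snd p then t x else 0) + covered_sum R t n"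
    unfolding covered_sum_def split by (simp add: sum.distrib)
  moreover have "(\<Sum>x<n. if fst p < x \<and> x < snd p then t x else 0) = tsum t (fst p) (snd p)"
  proof -
    have "(\<Sum>x<n. if fst p < x \<and> x < snd p then t x else 0) = sum t {x\<in>{..<n}. fst p < x \<and> x < snd p}"
      by (rule sum.inter_filter[symmetric]) simp
    also have "{x\<in>{..<n}. fst p < x \<and> x < snd p} = {fst p + 1..<snd p}" using Cons.prems by auto
    finally show ?thesis by (simp add: tsum_def)
  qed
  ultimately show ?case using Cons.IH[OF R] Cons.prems by simp
qed

definition toll_cost :: "('v, 'e) tollnet \<Rightarrow> ('e \<times> 'e list) list \<Rightarrow> nat \<Rightarrow> real" where
  "toll_cost G xs l = (if l = 0 then 0 else real (c G (fst (xs ! (l - 1)))))"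

text \<open>The zero-toll length of the path from \<open>s\<close> up to the tail of \<open>\<tau>\<^sub>j\<close>.\<close>

definition len_upto :: "('v, 'e) tollnet \<Rightarrow> 'e list \<Rightarrow> ('e \<times> 'e list) list \<Rightarrow> nat \<Rightarrow> real" where
  "len_upto G S0 xs j = (\<Sum>l<j. L0 G (seg S0 xs l) + toll_cost G xs l)"

lemma len_upto_Suc:
  "len_upto G S0 xs (Suc a) = len_upto G S0 xs a + L0 G (seg S0 xs a) + toll_cost G xs a"
  by (simp add: len_upto_def)

lemma L0_len_upto:
  "toll_decomp G S0 xs \<Longrightarrow> L0 G (S0 @ flat_blocks xs) = len_upto G S0 xs (length xs + 1)"
proof (induction xs rule: rev_induct)
  case Nil
  then show ?case by (simp add: len_upto_def seg_def toll_cost_def)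
next
  case (snoc x xs)
  have dec: "toll_decomp G S0 xs" "fst x \<in> tollA G" using snoc.prems by (auto simp: toll_decomp_def)
  have "len_upto G S0 (xs @ [x]) (length xs + 1) = len_upto G S0 xs (length xs + 1)"
    unfolding len_upto_def by (intro sum.cong) (auto simp: seg_def toll_cost_def nth_append)
  then have "len_upto G S0 (xs @ [x]) (length (xs @ [x]) + 1) =
      len_upto G S0 xs (length xs + 1) + L0 G (snd x) + real (c G (fst x))"
    by (simp add: len_upto_Suc seg_def toll_cost_def)
  then show ?case using snoc.IH[OF dec(1)] dec(2) by (simp add: L0_append L0_Cons arc_cost_toll)
qed

lemma L0_prefix:
  assumes "toll_decomp G S0 xs" "k \<le> length xs"
  shows "L0 G (S0 @ flat_blocks (take k xs)) = len_upto G S0 xs (k + 1)"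
proof -
  have "L0 G (S0 @ flat_blocks (take k xs)) = len_upto G S0 (take k xs) (length (take k xs) + 1)"
    by (rule L0_len_upto[OF toll_decomp_take[OF assms(1)]])
  also have "\<dots> = len_upto G S0 xs (k + 1)"
    unfolding len_upto_def using assms by (intro sum.cong) (auto simp: seg_def toll_cost_def min_def)
  finally show ?thesis .
qed

lemma len_upto_diff:
  assumes "i \<le> j"
  shows "len_upto G S0 xs j - len_upto G S0 xs i = (\<Sum>l\<in>{i..<j}. L0 G (seg S0 xs l) + toll_cost G xs l)"
proof -
  have "(\<Sum>l\<in>{0..<i}. L0 G (seg S0 xs l) + toll_cost G xs l) + (\<Sum>l\<in>{i..<j}. L0 G (seg S0 xs l) + toll_cost G xs l)
     = (\<Sum>l\<in>{0..<j}. L0 G (seg S0 xs l) + toll_cost G xs l)"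
    using assms by (intro sum.atLeastLessThan_concat) auto
  then show ?thesis unfolding len_upto_def by (simp add: atLeast0LessThan)
qed

lemma Lij_len_upto:
  assumes dec: "toll_decomp G S0 xs"
    and tight: "\<forall>k\<le>length xs. Uij G (S0 @ flat_blocks xs) k (k + 1) = ereal (L0 G (seg S0 xs k))"
    and ij: "i < j" "j \<le> length xs + 1"
  shows "Lij G (S0 @ flat_blocks xs) i j = ereal (len_upto G S0 xs j - len_upto G S0 xs i - toll_cost G xs i)"
proof -
  have "(\<Sum>l\<in>{i..<j}. Uij G (S0 @ flat_blocks xs) l (l + 1)) = (\<Sum>l\<in>{i..<j}. ereal (L0 G (seg S0 xs l)))"
    using tight ij by (intro sum.cong) auto
  also have "\<dots> = ereal (\<Sum>l\<in>{i..<j}. L0 G (seg S0 xs l))" by (rule sum_ereal)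
  finally have "(\<Sum>l\<in>{i..<j}. Uij G (S0 @ flat_blocks xs) l (l + 1)) = ereal (\<Sum>l\<in>{i..<j}. L0 G (seg S0 xs l))" .
  moreover have "(\<Sum>l\<in>{i + 1..<j}. real (c G (tau G (S0 @ flat_blocks xs) l))) = (\<Sum>l\<in>{i + 1..<j}. toll_cost G xs l)"
    using ij tau_toll_decomp[OF dec] by (intro sum.cong) (auto simp: toll_cost_def)
  moreover have "(\<Sum>l\<in>{i..<j}. toll_cost G xs l) = toll_cost G xs i + (\<Sum>l\<in>{i + 1..<j}. toll_cost G xs l)"
    using ij by (simp add: sum.atLeast_Suc_lessThan)
  ultimately show ?thesis
    using len_upto_diff[of i j G S0 xs] ij unfolding Lij_def by (simp add: sum.distrib)
qed

text \<open>The validity of a path in the paper, in the form the analysis of MaxRev uses: every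
  toll-free segment is a shortest toll-free path between its ends, and no toll-free bypass is
  shorter than the stretch of the path it replaces.\<close>

definition valid_decomp :: "('v, 'e) tollnet \<Rightarrow> 'e list \<Rightarrow> ('e \<times> 'e list) list \<Rightarrow> bool" where
  "valid_decomp G S0 xs \<longleftrightarrow> toll_decomp G S0 xs
     \<and> (\<forall>k\<le>length xs. Uij G (S0 @ flat_blocks xs) k (k + 1) = ereal (L0 G (seg S0 xs k)))
     \<and> (\<forall>i j. i < j \<and> j \<le> length xs + 1 \<longrightarrow> Lij G (S0 @ flat_blocks xs) i j \<le> Uij G (S0 @ flat_blocks xs) i j)"

lemma sorted_wrt_nth_Suc:
  fixes L :: "nat list"
  assumes s: "sorted_wrt (<) L" and a: "a + 1 < length L" and y: "y \<in> set L" "L ! a < y"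
    and m: "\<forall>x\<in>set L. L ! a < x \<longrightarrow> y \<le> x"
  shows "L ! (a + 1) = y"
proof -
  have "L ! a < L ! (a + 1)" using sorted_wrt_nth_less[OF s, of a "a + 1"] a by simp
  then have "y \<le> L ! (a + 1)" using m a by auto
  obtain j where j: "j < length L" "L ! j = y" using y by (auto simp: in_set_conv_nth)
  have "a < j"
  proof (rule ccontr)
    assume "\<not> a < j"
    then have "j \<le> a" by simp
    then have "L ! j \<le> L ! a" using sorted_wrt_nth_less[OF s, of j a] a by (cases "j = a") force+
    then show False using j y by simp
  qed
  then have "L ! (a + 1) \<le> L ! j" using sorted_wrt_nth_less[OF s, of "a + 1" j] j by (cases "a + 1 = j") force+
  then show ?thesis using \<open>y \<le> L ! (a + 1)\<close> j by simp
qed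

definition kept :: "(nat \<times> nat) list \<Rightarrow> nat \<Rightarrow> nat list" where
  "kept A m = filter (\<lambda>k. \<not> covered A k) [1..<m + 1]"

definition kept_nth :: "(nat \<times> nat) list \<Rightarrow> nat \<Rightarrow> nat \<Rightarrow> nat" where
  "kept_nth A m a = ((0 # kept A m) @ [m + 1]) ! a"

lemma kept_range: "k \<in> set (kept A m) \<Longrightarrow> 1 \<le> k \<and> k \<le> m"
  unfolding kept_def by auto

lemma length_kept: "length (kept A m) = card {x\<in>{1..<m + 1}. \<not> covered A x}"
proof -
  have "distinct (kept A m)" unfolding kept_def by simp
  then have "length (kept A m) = card (set (kept A m))" by (simp add: distinct_card)
  moreover have "set (kept A m) = {x\<in>{1..<m + 1}. \<not> covered A x}" unfolding kept_def by auto
  ultimately show ?thesis by simp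
qed

lemma card_uncovered_less:
  assumes "p \<in> set A" "fst p + 1 < snd p" "snd p \<le> m + 1"
  shows "card {x\<in>{1..<m + 1}. \<not> covered A x} < m"
proof -
  have "fst p + 1 \<in> {1..<m + 1}" "covered A (fst p + 1)"
    using assms by (auto simp: covered_def)
  then have "{x\<in>{1..<m + 1}. \<not> covered A x} \<subset> {1..<m + 1}" by blast
  then have "card {x\<in>{1..<m + 1}. \<not> covered A x} < card {1..<m + 1}"
    by (rule psubset_card_mono[rotated]) simp
  then show ?thesis by simp
qed

lemma card_uncovered_add:
  assumes "\<And>x. 1 \<le> x \<Longrightarrow> x \<le> m \<Longrightarrow> covered A x \<or> covered B x"
  shows "card {x\<in>{1..<m + 1}. \<not> covered A x} + card {x\<in>{1..<m + 1}. \<not> covered B x} \<le> m"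
proof -
  let ?UA = "{x\<in>{1..<m + 1}. \<not> covered A x}" and ?UB = "{x\<in>{1..<m + 1}. \<not> covered B x}"
  have "?UA \<inter> ?UB = {}" using assms by fastforce
  then have "card ?UA + card ?UB = card (?UA \<union> ?UB)"
    by (intro card_Un_disjoint[symmetric]) simp_all
  also have "\<dots> \<le> card {1..<m + 1}" by (intro card_mono) auto
  finally show ?thesis by simp
qed

lemma card_uncovered_even_odd:
  assumes pairs: "\<forall>p\<in>set ps. fst p + 1 < snd p \<and> snd p \<le> m + 1" and two: "2 \<le> length ps"
    and cov: "\<And>x. 1 \<le> x \<Longrightarrow> x \<le> m \<Longrightarrow> covered ps x"
  shows "card {x\<in>{1..<m + 1}. \<not> covered (nths ps {n. even n}) x} < m"
    and "card {x\<in>{1..<m + 1}. \<not> covered (nths ps {n. odd n}) x} < m"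
    and "card {x\<in>{1..<m + 1}. \<not> covered (nths ps {n. even n}) x}
      + card {x\<in>{1..<m + 1}. \<not> covered (nths ps {n. odd n}) x} \<le> m"
proof -
  have "ps \<noteq> []" using two by auto
  then have "nths ps {n. even n} \<noteq> []" by (rule nths_even_nonempty)
  moreover have "nths ps {n. odd n} \<noteq> []" using two by (rule nths_odd_nonempty)
  ultimately obtain p1 p2 where p: "p1 \<in> set (nths ps {n. even n})" "p2 \<in> set (nths ps {n. odd n})"
    by (meson last_in_set)
  then show "card {x\<in>{1..<m + 1}. \<not> covered (nths ps {n. even n}) x} < m"
    "card {x\<in>{1..<m + 1}. \<not> covered (nths ps {n. odd n}) x} < m"
    using card_uncovered_less[OF p(1)] card_uncovered_less[OF p(2)] pairs p
    by (auto dest: in_set_nthsD)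
  have "covered (nths ps {n. even n}) x \<or> covered (nths ps {n. odd n}) x" if "1 \<le> x" "x \<le> m" for x
    using cov[OF that] set_nths_even_odd[of ps] unfolding covered_def by blast
  then show "card {x\<in>{1..<m + 1}. \<not> covered (nths ps {n. even n}) x}
      + card {x\<in>{1..<m + 1}. \<not> covered (nths ps {n. odd n}) x} \<le> m"
    by (rule card_uncovered_add)
qed

context
  fixes A :: "(nat \<times> nat) list" and m :: nat
  assumes chain: "interval_chain A" and bounded: "\<forall>p\<in>set A. snd p \<le> m + 1"
begin

lemma kept_sorted: "sorted_wrt (<) ((0 # kept A m) @ [m + 1])"
  unfolding kept_def by (auto simp: sorted_wrt_append sorted_wrt_filter)

lemma kept_set: "set ((0 # kept A m) @ [m + 1]) = {x. x \<le> m + 1 \<and> \<not> covered A x}"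
proof
  show "set ((0 # kept A m) @ [m + 1]) \<subseteq> {x. x \<le> m + 1 \<and> \<not> covered A x}"
    using bounded unfolding kept_def covered_def by auto
  show "{x. x \<le> m + 1 \<and> \<not> covered A x} \<subseteq> set ((0 # kept A m) @ [m + 1])"
  proof
    fix x assume x: "x \<in> {x. x \<le> m + 1 \<and> \<not> covered A x}"
    show "x \<in> set ((0 # kept A m) @ [m + 1])"
    proof (cases "x = 0 \<or> x = m + 1")
      case True then show ?thesis by auto
    next
      case False then show ?thesis using x unfolding kept_def by (simp del: upt_Suc)
    qed
  qed
qed

lemma kept_mem: "x \<in> set ((0 # kept A m) @ [m + 1]) \<longleftrightarrow> x \<le> m + 1 \<and> \<not> covered A x"
  using kept_set by blast

lemma kept_nth_0: "kept_nth A m 0 = 0"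
  by (simp add: kept_nth_def)

lemma kept_nth_last: "kept_nth A m (length (kept A m) + 1) = m + 1"
proof -
  have "length (0 # kept A m) = length (kept A m) + 1" by simp
  then show ?thesis unfolding kept_nth_def by (metis nth_append_length)
qed

lemma kept_nth_kept: "1 \<le> a \<Longrightarrow> a \<le> length (kept A m) \<Longrightarrow> kept_nth A m a = kept A m ! (a - 1)"
proof -
  assume a: "1 \<le> a" "a \<le> length (kept A m)"
  then obtain a' where a': "a = Suc a'" by (cases a) auto
  have "((0 # kept A m) @ [m + 1]) ! a = (kept A m @ [m + 1]) ! a'" unfolding a' by simp
  also have "\<dots> = kept A m ! a'" using a a' by (simp only: nth_append) simp
  finally show ?thesis unfolding kept_nth_def a' by simp
qed

lemma kept_nth_uncovered: "a \<le> length (kept A m) + 1 \<Longrightarrow> kept_nth A m a \<le> m + 1 \<and> \<not> covered A (kept_nth A m a)"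
proof -
  assume a: "a \<le> length (kept A m) + 1"
  have "a < length ((0 # kept A m) @ [m + 1])" using a by simp
  then have "kept_nth A m a \<in> set ((0 # kept A m) @ [m + 1])" unfolding kept_nth_def by (rule nth_mem)
  then have "kept_nth A m a \<in> {x. x \<le> m + 1 \<and> \<not> covered A x}" unfolding kept_set .
  then show ?thesis by blast
qed

lemma kept_nth_le: "a \<le> length (kept A m) \<Longrightarrow> kept_nth A m a \<le> m"
proof (cases a)
  case 0 then show ?thesis by (simp add: kept_nth_0)
next
  case (Suc a')
  assume a: "a \<le> length (kept A m)"
  then have "kept A m ! a' \<in> set (kept A m)" using Suc by simp
  moreover have "set (kept A m) \<subseteq> {1..m}" unfolding kept_def by auto
  moreover have "kept_nth A m a = kept A m ! a'" using kept_nth_kept[of a] a Suc by simp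
  ultimately show ?thesis by auto
qed

lemma kept_nth_mono: "a < b \<Longrightarrow> b \<le> length (kept A m) + 1 \<Longrightarrow> kept_nth A m a < kept_nth A m b"
  unfolding kept_nth_def using sorted_wrt_nth_less[OF kept_sorted, of a b] by simp

lemma kept_nth_Suc_eqI:
  assumes a: "a \<le> length (kept A m)" and y: "kept_nth A m a < y" "y \<le> m + 1" "\<not> covered A y"
    and least: "\<And>x. kept_nth A m a < x \<Longrightarrow> x \<le> m + 1 \<Longrightarrow> \<not> covered A x \<Longrightarrow> y \<le> x"
  shows "kept_nth A m (a + 1) = y"
  unfolding kept_nth_def
proof (rule sorted_wrt_nth_Suc[OF kept_sorted])
  show "a + 1 < length ((0 # kept A m) @ [m + 1])" using a by simp
  show "y \<in> set ((0 # kept A m) @ [m + 1])" using y kept_mem by blast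
qed (use y least kept_mem in \<open>auto simp: kept_nth_def\<close>)

lemma kept_nth_Suc_unpaired:
  assumes a: "a \<le> length (kept A m)" and None: "map_of A (kept_nth A m a) = None"
  shows "kept_nth A m (a + 1) = kept_nth A m a + 1"
proof (rule kept_nth_Suc_eqI[OF a])
  let ?k = "kept_nth A m a"
  show "?k + 1 \<le> m + 1" using kept_nth_le[OF a] by simp
  show "\<not> covered A (?k + 1)"
  proof
    assume "covered A (?k + 1)"
    then obtain q where q: "q \<in> set A" "fst q < ?k + 1" "?k + 1 < snd q" unfolding covered_def by auto
    have "fst q \<noteq> ?k" using q None by (force simp: map_of_eq_None_iff)
    then have "covered A ?k" using q unfolding covered_def by force
    then show False using kept_nth_uncovered[of a] a by simp
  qed
qed auto

lemma kept_nth_Suc_paired: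
  assumes a: "a \<le> length (kept A m)" and Some: "map_of A (kept_nth A m a) = Some b"
  shows "kept_nth A m (a + 1) = b"
proof (rule kept_nth_Suc_eqI[OF a])
  let ?k = "kept_nth A m a"
  have kb: "(?k, b) \<in> set A" using Some by (rule map_of_SomeD)
  show "?k < b" using interval_chain_lt[OF chain kb] by simp
  show "b \<le> m + 1" using bounded kb by fastforce
  show "\<not> covered A b"
  proof
    assume "covered A b"
    then obtain q where q: "q \<in> set A" "fst q < b" "b < snd q" unfolding covered_def by auto
    then have "q \<noteq> (?k, b)" by auto
    then have "b \<le> fst q \<or> snd q \<le> ?k" using interval_chain_disjoint[OF chain kb q(1)] by auto
    then show False using q interval_chain_lt[OF chain kb] by auto
  qed
  show "b \<le> x" if "?k < x" "\<not> covered A x" for x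
    using that kb unfolding covered_def by force
qed

end

definition child_seg :: "('v, 'e) tollnet \<Rightarrow> ('v \<Rightarrow> 'v \<Rightarrow> 'e list) \<Rightarrow> 'e list \<Rightarrow> ('e \<times> 'e list) list
    \<Rightarrow> (nat \<times> nat) list \<Rightarrow> nat \<Rightarrow> 'e list" where
  "child_seg G ups S0 xs A k = (case map_of A k of
      Some b \<Rightarrow> ups (TERMv G (S0 @ flat_blocks xs) k) (INITv G (S0 @ flat_blocks xs) b)
    | None \<Rightarrow> seg S0 xs k)"

definition child_blocks :: "('v, 'e) tollnet \<Rightarrow> ('v \<Rightarrow> 'v \<Rightarrow> 'e list) \<Rightarrow> 'e list \<Rightarrow> ('e \<times> 'e list) list
    \<Rightarrow> (nat \<times> nat) list \<Rightarrow> nat list \<Rightarrow> ('e \<times> 'e list) list" where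
  "child_blocks G ups S0 xs A ks = map (\<lambda>k. (fst (xs ! (k - 1)), child_seg G ups S0 xs A k)) ks"

lemma child_blocks_append:
  "child_blocks G ups S0 xs A (ks @ ks') = child_blocks G ups S0 xs A ks @ child_blocks G ups S0 xs A ks'"
  by (simp add: child_blocks_def)

lemma child_blocks_unpaired:
  "(\<And>k. k \<in> set ks \<Longrightarrow> 0 < k \<and> map_of A k = None) \<Longrightarrow>
     child_blocks G ups S0 xs A ks = map (\<lambda>k. xs ! (k - 1)) ks"
  by (auto simp: child_blocks_def child_seg_def seg_def intro!: map_cong)

lemma child_blocks_Cons_pair:
  "a \<notin> set ks \<Longrightarrow> child_blocks G ups S0 xs ((a, b) # R) ks = child_blocks G ups S0 xs R ks"
  by (auto simp: child_blocks_def child_seg_def intro!: map_cong)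

lemma child_seg_Cons_pair:
  "child_seg G ups S0 xs ((a, b) # R) a = ups (TERMv G (S0 @ flat_blocks xs) a) (INITv G (S0 @ flat_blocks xs) b)"
  by (simp add: child_seg_def)

lemma map_nth_upt: "1 \<le> u \<Longrightarrow> u \<le> w \<Longrightarrow> w \<le> length xs + 1 \<Longrightarrow>
    map (\<lambda>k. xs ! (k - 1)) [u..<w] = take (w - u) (drop (u - 1) xs)"
  by (rule nth_equalityI) (auto simp: nth_append)

lemma upt_append: "i \<le> j \<Longrightarrow> j \<le> k \<Longrightarrow> [i..<j] @ [j..<k] = [i..<k]"
  using upt_add_eq_append[of i j "k - j"] by simp

lemma not_covered_Cons:
  assumes "\<forall>q\<in>set R. b \<le> fst q" "x \<le> a \<or> b \<le> x"
  shows "covered ((a, b) # R) x \<longleftrightarrow> covered R x"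
  using assms by (auto simp: covered_def)

lemma filter_uncovered_Cons:
  assumes "u \<le> a" "a < b" "b \<le> n" and R: "\<forall>q\<in>set R. b \<le> fst q"
  shows "filter (\<lambda>k. \<not> covered ((a, b) # R) k) [u..<n] = [u..<a] @ a # filter (\<lambda>k. \<not> covered R k) [b..<n]"
proof -
  let ?Q = "\<lambda>k. \<not> covered ((a, b) # R) k"
  have "[u..<n] = [u..<a] @ a # [Suc a..<b] @ [b..<n]"
    using assms(1-3) by (simp add: upt_append upt_conv_Cons[symmetric])
  moreover have "filter ?Q [u..<a] = [u..<a]"
    using R assms(2) by (intro filter_True) (fastforce simp: covered_def)
  moreover have "?Q a" using R assms(2) by (fastforce simp: covered_def)
  moreover have "filter ?Q [Suc a..<b] = []" by (auto simp: filter_empty_conv covered_def)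
  moreover have "filter ?Q [b..<n] = filter (\<lambda>k. \<not> covered R k) [b..<n]"
    using not_covered_Cons[OF R] by (intro filter_cong) auto
  ultimately show ?thesis by simp
qed

context
  fixes G :: "('v, 'e) tollnet" and S0 :: "'e list" and xs :: "('e \<times> 'e list) list"
    and ups :: "'v \<Rightarrow> 'v \<Rightarrow> 'e list"
  assumes dec: "toll_decomp G S0 xs"
begin

lemma drop_bef_take_aft:
  assumes "1 \<le> u" "u \<le> a" "a \<le> length xs"
  shows "drop (bef G (S0 @ flat_blocks xs) u) (take (aft G (S0 @ flat_blocks xs) a) (S0 @ flat_blocks xs)) =
    flat_blocks (take (a - u) (drop (u - 1) xs)) @ [fst (xs ! (a - 1))]"
proof -
  have "take (a - 1) xs = take (u - 1) xs @ take (a - u) (drop (u - 1) xs)"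
    using assms take_add[of "u - 1" "a - u" xs] by simp
  then have "take (aft G (S0 @ flat_blocks xs) a) (S0 @ flat_blocks xs) =
      (S0 @ flat_blocks (take (u - 1) xs)) @ flat_blocks (take (a - u) (drop (u - 1) xs)) @ [fst (xs ! (a - 1))]"
    using assms take_aft_toll_decomp[OF dec, of a] by simp
  moreover have "length (S0 @ flat_blocks (take (u - 1) xs)) = bef G (S0 @ flat_blocks xs) u"
    using assms bef_toll_decomp[OF dec, of u] by (simp add: toll_pos_def)
  ultimately show ?thesis by (metis append_eq_conv_conj)
qed

lemma buildp_from:
  "1 \<le> u \<Longrightarrow> u \<le> length xs + 1 \<Longrightarrow> interval_chain A \<Longrightarrow> \<forall>p\<in>set A. snd p \<le> length xs + 1 \<Longrightarrow>
   (A \<noteq> [] \<longrightarrow> u \<le> fst (hd A)) \<Longrightarrow>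
   buildp G ups (S0 @ flat_blocks xs) A (bef G (S0 @ flat_blocks xs) u) =
   flat_blocks (child_blocks G ups S0 xs A (filter (\<lambda>k. \<not> covered A k) [u..<length xs + 1]))"
proof (induction A arbitrary: u)
  case Nil
  have "child_blocks G ups S0 xs [] [u..<length xs + 1] = drop (u - 1) xs"
    using Nil map_nth_upt[of u "length xs + 1" xs] by (subst child_blocks_unpaired) auto
  then show ?case
    using Nil drop_bef_toll_decomp[OF dec] by (simp add: covered_def del: upt_Suc)
next
  case (Cons p R)
  obtain a b where p: "p = (a, b)" by fastforce
  let ?P = "S0 @ flat_blocks xs" and ?m = "length xs"
  have ab: "u \<le> a" "a < b" "b \<le> ?m + 1" "interval_chain R"
    using Cons.prems p by (auto simp: interval_chain_Cons)
  have R: "\<forall>q\<in>set R. b \<le> fst q" using interval_chain_Cons_le[of p R] Cons.prems p by auto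
  let ?F = "filter (\<lambda>k. \<not> covered R k) [b..<?m + 1]"
  have "buildp G ups ?P (p # R) (bef G ?P u) =
      flat_blocks (take (a - u) (drop (u - 1) xs)) @ [fst (xs ! (a - 1))]
      @ ups (TERMv G ?P a) (INITv G ?P b) @ flat_blocks (child_blocks G ups S0 xs R ?F)"
    using drop_bef_take_aft[of u a] Cons.IH[of b] Cons.prems ab R p by (simp add: interval_chain_Cons)
  moreover have "child_blocks G ups S0 xs (p # R) [u..<a] = take (a - u) (drop (u - 1) xs)"
    using Cons.prems ab R map_nth_upt[of u a xs]
    by (subst child_blocks_unpaired) (auto simp: p map_of_eq_None_iff)
  moreover have "child_blocks G ups S0 xs (p # R) [a] = [(fst (xs ! (a - 1)), ups (TERMv G ?P a) (INITv G ?P b))]"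
    by (simp add: p child_blocks_def child_seg_Cons_pair)
  moreover have "child_blocks G ups S0 xs (p # R) ?F = child_blocks G ups S0 xs R ?F"
    unfolding p using ab by (intro child_blocks_Cons_pair) simp
  ultimately show ?case
    using filter_uncovered_Cons[OF ab(1,2,3) R] child_blocks_append[of G ups S0 xs "p # R" "[u..<a]" "a # ?F"]
      child_blocks_append[of G ups S0 xs "p # R" "[a]" ?F]
    by (simp add: p del: upt_Suc)
qed

lemma buildp_child:
  assumes A: "interval_chain A" "\<forall>p\<in>set A. snd p \<le> length xs + 1"
  shows "buildp G ups (S0 @ flat_blocks xs) A 0 =
    child_seg G ups S0 xs A 0 @ flat_blocks (child_blocks G ups S0 xs A (filter (\<lambda>k. \<not> covered A k) [1..<length xs + 1]))"
proof (cases A)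
  case Nil
  have "child_blocks G ups S0 xs [] [1..<length xs + 1] = xs"
    using map_nth_upt[of 1 "length xs + 1" xs] by (subst child_blocks_unpaired) auto
  then show ?thesis
    using Nil by (simp add: covered_def child_seg_def seg_def del: upt_Suc)
next
  case (Cons p R)
  obtain a b where p: "p = (a, b)" by fastforce
  let ?P = "S0 @ flat_blocks xs" and ?m = "length xs"
  have ab: "a < b" "b \<le> ?m + 1" "interval_chain R"
    using A Cons p by (auto simp: interval_chain_Cons)
  have R: "\<forall>q\<in>set R. b \<le> fst q" using interval_chain_Cons_le[of p R] A Cons p by auto
  show ?thesis
  proof (cases "a = 0")
    case True
    have "filter (\<lambda>k. \<not> covered A k) [0..<?m + 1] = 0 # filter (\<lambda>k. \<not> covered R k) [b..<?m + 1]"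
      using filter_uncovered_Cons[of 0 a b "?m + 1" R] ab R True by (simp add: Cons p)
    then have "filter (\<lambda>k. \<not> covered A k) [1..<?m + 1] = filter (\<lambda>k. \<not> covered R k) [b..<?m + 1]"
      by (simp add: upt_conv_Cons covered_def del: upt_Suc)
    moreover have "buildp G ups ?P R (bef G ?P b) =
        flat_blocks (child_blocks G ups S0 xs R (filter (\<lambda>k. \<not> covered R k) [b..<?m + 1]))"
      using buildp_from[of b R] ab R A(2) Cons by (auto simp del: upt_Suc)
    ultimately show ?thesis
      using True ab by (simp add: Cons p aft_def child_seg_Cons_pair child_blocks_Cons_pair)
  next
    case False
    have "take (aft G ?P a) ?P = S0 @ drop (bef G ?P 1) (take (aft G ?P a) ?P)"
      using take_aft_toll_decomp[OF dec, of a] drop_bef_take_aft[of 1 a] False ab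
      by (simp del: drop_append take_append)
    then have "buildp G ups ?P A 0 = S0 @ buildp G ups ?P A (bef G ?P 1)"
      unfolding Cons p buildp.simps drop_0 by (subst (1) \<open>take _ _ = _\<close>) simp
    also have "\<dots> = S0 @ flat_blocks (child_blocks G ups S0 xs A (filter (\<lambda>k. \<not> covered A k) [1..<?m + 1]))"
      using buildp_from[of 1 A] A Cons p False by simp
    finally have "buildp G ups ?P A 0 =
        S0 @ flat_blocks (child_blocks G ups S0 xs A (filter (\<lambda>k. \<not> covered A k) [1..<?m + 1]))" .
    moreover have "map_of A 0 = None" using R False ab by (auto simp: Cons p map_of_eq_None_iff)
    ultimately show ?thesis by (simp add: child_seg_def seg_def)
  qed
qed

end

section \<open>The children are valid\<close>

locale child_setup =
  fixes G :: "('v, 'e) tollnet" and S0 :: "'e list" and xs :: "('e \<times> 'e list) list"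
    and ups :: "'v \<Rightarrow> 'v \<Rightarrow> 'e list" and A :: "(nat \<times> nat) list" and t :: "nat \<Rightarrow> real"
  assumes dec: "toll_decomp G S0 xs"
    and disj: "tollA G \<inter> freeA G = {}"
    and ups_shortest: "\<And>u v Q. spath G (freeA G) u Q v \<Longrightarrow> spath G (freeA G) u (ups u v) v \<and> L0 G (ups u v) \<le> L0 G Q"
    and chain: "interval_chain A"
    and bounded: "\<forall>p\<in>set A. snd p \<le> length xs + 1"
    and tight_pairs: "\<forall>p\<in>set A. ereal (tsum t (fst p) (snd p)) = Dij G (S0 @ flat_blocks xs) (fst p) (snd p)"
    and feasible: "\<forall>i j. i < j \<and> j \<le> length xs + 1 \<longrightarrow> ereal (tsum t i j) \<le> Dij G (S0 @ flat_blocks xs) i j"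
    and nonneg: "\<forall>l. 0 \<le> t l"
    and tight: "\<forall>k\<le>length xs. Uij G (S0 @ flat_blocks xs) k (k + 1) = ereal (L0 G (seg S0 xs k))"
begin

text \<open>The child keeps the toll arcs \<open>\<tau>\<^sub>k\<close> with \<open>k \<in> K\<close>, those not strictly inside a pair
  of \<open>A\<close>; its \<open>a\<close>-th toll arc is \<open>\<tau>\<^bsub>pidx a\<^esub>\<close>, where index \<open>0\<close> stands for \<open>s\<close> and
  \<open>m + 1\<close> for \<open>t\<close>.\<close>

abbreviation "par \<equiv> S0 @ flat_blocks xs"
abbreviation "m \<equiv> length xs"
abbreviation "K \<equiv> kept A (length xs)"
abbreviation "S0c \<equiv> child_seg G ups S0 xs A 0"
abbreviation "xsc \<equiv> child_blocks G ups S0 xs A (kept A (length xs))"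
abbreviation "pidx \<equiv> kept_nth A (length xs)"

lemma pair_spath:
  assumes p: "p \<in> set A"
  shows "\<exists>Q. spath G (freeA G) (TERMv G par (fst p)) Q (INITv G par (snd p))"
proof -
  have "fst p < snd p" "snd p \<le> m + 1" using interval_chain_lt[OF chain p] bounded p by auto
  then have "Lij G par (fst p) (snd p) \<noteq> \<infinity>" using Lij_len_upto[OF dec tight] by simp
  then have "Uij G par (fst p) (snd p) \<noteq> \<infinity>"
    using tight_pairs p unfolding Dij_def by (cases "Uij G par (fst p) (snd p)") auto
  then show ?thesis unfolding Uij_def by (rule Ufree_finite_imp_spath)
qed

lemma Uij_pair: "(k, b) \<in> set A \<Longrightarrow> Uij G par k b = ereal (L0 G (ups (TERMv G par k) (INITv G par b)))"
  using pair_spath[of "(k, b)"] Ufree_eq_ups[OF ups_shortest] by (auto simp: Uij_def)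

lemma ups_toll_free: "p \<in> set A \<Longrightarrow> toll_free G (ups (TERMv G par (fst p)) (INITv G par (snd p)))"
proof -
  assume p: "p \<in> set A"
  then have "spath G (freeA G) (TERMv G par (fst p)) (ups (TERMv G par (fst p)) (INITv G par (snd p))) (INITv G par (snd p))"
    using pair_spath ups_shortest by blast
  then show ?thesis using disj unfolding spath_def toll_free_def by auto
qed

lemma child_seg_toll_free: "k \<le> m \<Longrightarrow> toll_free G (child_seg G ups S0 xs A k)"
proof (cases "map_of A k")
  case None
  assume k: "k \<le> m"
  then show ?thesis using None dec unfolding child_seg_def seg_def toll_decomp_def
    by (cases k) (auto simp: nth_mem)
next
  case (Some b)
  then have "(k, b) \<in> set A" by (rule map_of_SomeD)
  then show ?thesis using Some ups_toll_free[of "(k, b)"] by (simp add: child_seg_def)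
qed

lemma child_toll_decomp: "toll_decomp G S0c xsc"
  unfolding toll_decomp_def child_blocks_def
proof (intro conjI ballI)
  show "toll_free G S0c" using child_seg_toll_free[of 0] by simp
  fix p assume "p \<in> set (map (\<lambda>k. (fst (xs ! (k - 1)), child_seg G ups S0 xs A k)) K)"
  then obtain k where k: "k \<in> set K" "p = (fst (xs ! (k - 1)), child_seg G ups S0 xs A k)" by auto
  then have "1 \<le> k" "k \<le> m" using kept_range by auto
  then have "xs ! (k - 1) \<in> set xs" by simp
  then show "fst p \<in> tollA G" using dec k unfolding toll_decomp_def by auto
  show "toll_free G (snd p)" using k child_seg_toll_free \<open>k \<le> m\<close> by simp
qed

lemma length_child_blocks: "length xsc = length K"
  by (simp add: child_blocks_def)

lemma ntoll_child: "ntoll G (S0c @ flat_blocks xsc) = length K"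
  using ntoll_toll_decomp[OF child_toll_decomp] length_child_blocks by simp

lemma kept_nth_ge1: "1 \<le> a \<Longrightarrow> a \<le> length K + 1 \<Longrightarrow> 1 \<le> pidx a"
  using kept_nth_mono[OF chain bounded, of 0 a] kept_nth_0[OF chain bounded] by simp

lemma tau_child: "1 \<le> a \<Longrightarrow> a \<le> length K \<Longrightarrow> tau G (S0c @ flat_blocks xsc) a = tau G par (pidx a)"
proof -
  assume a: "1 \<le> a" "a \<le> length K"
  have "tau G (S0c @ flat_blocks xsc) a = fst (xsc ! (a - 1))" using tau_toll_decomp[OF child_toll_decomp] a length_child_blocks by simp
  also have "\<dots> = fst (xs ! (K ! (a - 1) - 1))" using a by (simp add: child_blocks_def)
  also have "K ! (a - 1) = pidx a" using kept_nth_kept[OF chain bounded a] by simp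
  also have "fst (xs ! (pidx a - 1)) = tau G par (pidx a)"
    using tau_toll_decomp[OF dec, of "pidx a"] kept_nth_ge1[of a] kept_nth_le[OF chain bounded, of a] a by simp
  finally show ?thesis .
qed

lemma TERMv_child: "a \<le> length K \<Longrightarrow> TERMv G (S0c @ flat_blocks xsc) a = TERMv G par (pidx a)"
proof (cases "a = 0")
  case True then show ?thesis by (simp add: TERMv_def kept_nth_0[OF chain bounded])
next
  case False
  assume a: "a \<le> length K"
  then show ?thesis using False tau_child[of a] kept_nth_ge1[of a] by (simp add: TERMv_def)
qed

lemma INITv_child: "1 \<le> b \<Longrightarrow> b \<le> length K + 1 \<Longrightarrow> INITv G (S0c @ flat_blocks xsc) b = INITv G par (pidx b)"
proof (cases "b = length K + 1")
  case True then show ?thesis using ntoll_child kept_nth_last[OF chain bounded] ntoll_toll_decomp[OF dec] by (simp add: INITv_def)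
next
  case False
  assume b: "1 \<le> b" "b \<le> length K + 1"
  then have b': "b \<le> length K" using False by simp
  have "pidx b \<le> m" using kept_nth_le[OF chain bounded b'] .
  then show ?thesis using False b' b tau_child[of b] ntoll_child ntoll_toll_decomp[OF dec] by (simp add: INITv_def)
qed

lemma Uij_child: "a \<le> length K \<Longrightarrow> 1 \<le> b \<Longrightarrow> b \<le> length K + 1 \<Longrightarrow>
   Uij G (S0c @ flat_blocks xsc) a b = Uij G par (pidx a) (pidx b)"
  by (simp add: Uij_def TERMv_child INITv_child)

lemma seg_child: "a \<le> length K \<Longrightarrow> seg S0c xsc a = child_seg G ups S0 xs A (pidx a)"
proof (cases "a = 0")
  case True then show ?thesis by (simp add: seg_def kept_nth_0[OF chain bounded])
next
  case False
  assume a: "a \<le> length K"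
  then show ?thesis using False kept_nth_kept[OF chain bounded, of a] by (simp add: seg_def child_blocks_def)
qed

lemma toll_cost_child: "a \<le> length K \<Longrightarrow> toll_cost G xsc a = toll_cost G xs (pidx a)"
proof (cases "a = 0")
  case True then show ?thesis by (simp add: toll_cost_def kept_nth_0[OF chain bounded])
next
  case False
  assume a: "a \<le> length K"
  then have "1 \<le> pidx a" using kept_nth_ge1[of a] False by simp
  then show ?thesis using a False kept_nth_kept[OF chain bounded, of a] by (simp add: toll_cost_def child_blocks_def)
qed

lemma Uij_child_tight: "a \<le> length K \<Longrightarrow> Uij G (S0c @ flat_blocks xsc) a (a + 1) = ereal (L0 G (seg S0c xsc a))"
proof -
  assume a: "a \<le> length K"
  let ?k = "pidx a"
  have u: "Uij G (S0c @ flat_blocks xsc) a (a + 1) = Uij G par ?k (pidx (a + 1))" using Uij_child[of a "a + 1"] a by simp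
  have km: "?k \<le> m" using kept_nth_le[OF chain bounded a] .
  show ?thesis
  proof (cases "map_of A ?k")
    case None
    then have "pidx (a + 1) = ?k + 1" using kept_nth_Suc_unpaired[OF chain bounded a] None by simp
    then show ?thesis using u seg_child[OF a] None tight km by (simp add: child_seg_def)
  next
    case (Some b)
    then have kb: "(?k, b) \<in> set A" by (rule map_of_SomeD)
    have "pidx (a + 1) = b" using kept_nth_Suc_paired[OF chain bounded a] Some by simp
    moreover have "Uij G par ?k b = ereal (L0 G (ups (TERMv G par ?k) (INITv G par b)))"
      using Uij_pair[OF kb] .
    ultimately show ?thesis using u seg_child[OF a] Some by (simp add: child_seg_def)
  qed
qed

lemma len_upto_child:
  "a \<le> length K + 1 \<Longrightarrow> len_upto G S0c xsc a = len_upto G S0 xs (pidx a) + covered_sum A t (pidx a)"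
proof (induction a)
  case 0
  then show ?case by (simp add: len_upto_def covered_sum_def kept_nth_0[OF chain bounded])
next
  case (Suc a)
  then have a: "a \<le> length K" by simp
  let ?k = "pidx a"
  have uncov: "\<not> covered A ?k" using kept_nth_uncovered[OF chain bounded, of a] a by simp
  have "len_upto G S0c xsc (Suc a) =
      len_upto G S0 xs ?k + covered_sum A t ?k + L0 G (child_seg G ups S0 xs A ?k) + toll_cost G xs ?k"
    using Suc seg_child[OF a] toll_cost_child[OF a] by (simp add: len_upto_Suc)
  also have "\<dots> = len_upto G S0 xs (pidx (Suc a)) + covered_sum A t (pidx (Suc a))"
  proof (cases "map_of A ?k")
    case None
    then have "pidx (Suc a) = ?k + 1" using kept_nth_Suc_unpaired[OF chain bounded a] by simp
    moreover have "covered_sum A t (?k + 1) = covered_sum A t ?k" using uncov by (simp add: covered_sum_def)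
    ultimately show ?thesis using None by (simp add: child_seg_def len_upto_Suc)
  next
    case (Some b)
    then have kb: "(?k, b) \<in> set A" by (rule map_of_SomeD)
    have "?k < b" "b \<le> m + 1" using interval_chain_lt[OF chain kb] bounded kb by auto
    moreover have "ereal (tsum t ?k b) = Dij G par ?k b" using tight_pairs kb by auto
    ultimately have "L0 G (ups (TERMv G par ?k) (INITv G par b)) =
        tsum t ?k b + (len_upto G S0 xs b - len_upto G S0 xs ?k - toll_cost G xs ?k)"
      using Uij_pair[OF kb] Lij_len_upto[OF dec tight, of ?k b] by (simp add: Dij_def)
    moreover have "covered_sum A t b - covered_sum A t ?k = tsum t ?k b"
      using covered_sum_diff_pair[OF kb _ uncov] \<open>?k < b\<close> by simp
    ultimately show ?thesis
      using Some kept_nth_Suc_paired[OF chain bounded a] by (simp add: child_seg_def)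
  qed
  finally show ?case .
qed

lemma L0_child: "L0 G (S0c @ flat_blocks xsc) = L0 G par + covered_sum A t (m + 1)"
  using L0_len_upto[OF child_toll_decomp] L0_len_upto[OF dec] len_upto_child[of "length K + 1"]
    kept_nth_last[OF chain bounded] length_child_blocks by simp

text \<open>A bypass of the child is a bypass of the parent, and the child's stretch it replaces is
  longer than the parent's by at most the tolls \<open>t\<close> strictly inside; this is where the
  constraints of MaxRev are used.\<close>

lemma Lij_le_Uij_child:
  assumes ab: "a < b" "b \<le> length K + 1"
  shows "Lij G (S0c @ flat_blocks xsc) a b \<le> Uij G (S0c @ flat_blocks xsc) a b"
proof -
  let ?ka = "pidx a" and ?kb = "pidx b"
  let ?L = "len_upto G S0 xs ?kb - len_upto G S0 xs ?ka - toll_cost G xs ?ka"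
  have kab: "?ka < ?kb" "?kb \<le> m + 1"
    using kept_nth_mono[OF chain bounded ab] kept_nth_uncovered[OF chain bounded ab(2)] by auto
  have uncov: "\<not> covered A ?ka" using kept_nth_uncovered[OF chain bounded, of a] ab by simp
  have "Lij G (S0c @ flat_blocks xsc) a b =
      ereal (len_upto G S0c xsc b - len_upto G S0c xsc a - toll_cost G xsc a)"
    using Lij_len_upto[OF child_toll_decomp _ ab(1)] Uij_child_tight ab length_child_blocks by simp
  also have "\<dots> = ereal (?L + (covered_sum A t ?kb - covered_sum A t ?ka))"
    using len_upto_child[of a] len_upto_child[of b] toll_cost_child[of a] ab by simp
  also have "\<dots> \<le> ereal (?L + tsum t ?ka ?kb)"
    using covered_sum_diff_le[OF _ uncov nonneg, of ?kb] kab by simp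
  also have "\<dots> \<le> Uij G par ?ka ?kb"
  proof -
    have "ereal (tsum t ?ka ?kb) \<le> Dij G par ?ka ?kb" using feasible kab by blast
    then show ?thesis
      using Lij_len_upto[OF dec tight kab] unfolding Dij_def by (cases "Uij G par ?ka ?kb") auto
  qed
  also have "\<dots> = Uij G (S0c @ flat_blocks xsc) a b" using Uij_child[of a b] ab by simp
  finally show ?thesis .
qed

lemma child_props:
  "valid_decomp G S0c xsc \<and> buildp G ups par A 0 = S0c @ flat_blocks xsc
     \<and> L0 G (S0c @ flat_blocks xsc) = L0 G par + sum_list (map (\<lambda>p. tsum t (fst p) (snd p)) A)
     \<and> length xsc = card {x\<in>{1..<m + 1}. \<not> covered A x}"
proof (intro conjI)
  show "valid_decomp G S0c xsc"
    unfolding valid_decomp_def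
    using child_toll_decomp Uij_child_tight Lij_le_Uij_child length_child_blocks by simp
  show "buildp G ups par A 0 = S0c @ flat_blocks xsc"
    using buildp_child[OF dec chain bounded] by (simp add: kept_def)
  show "L0 G (S0c @ flat_blocks xsc) = L0 G par + sum_list (map (\<lambda>p. tsum t (fst p) (snd p)) A)"
    using L0_child covered_sum_eq[OF chain bounded] by simp
  show "length xsc = card {x\<in>{1..<m + 1}. \<not> covered A x}"
    using length_child_blocks length_kept by simp
qed

end

section \<open>The approximation factor \<open>\<alpha>\<close>\<close>

declare alpha.simps [simp del]

lemma alpha_le_1: "k \<le> 1 \<Longrightarrow> alpha k = 1"
  by (subst alpha.simps) simp

lemma alpha_rec:
  assumes "2 \<le> k"
  shows "alpha k = Max {1 + alpha i + alpha j | i j. 0 < i \<and> i \<le> j \<and> j < k \<and> i + j \<le> k} / 2"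
proof -
  have "set (map (\<lambda>(i, j). 1 + alpha i + alpha j) [(i, j). i \<leftarrow> [1..<k], j \<leftarrow> [i..<k], i + j \<le> k])
      = {1 + alpha i + alpha j | i j. 0 < i \<and> i \<le> j \<and> j < k \<and> i + j \<le> k}"
    by force
  then show ?thesis using assms by (subst alpha.simps) simp
qed

lemma alpha_pair:
  assumes "0 < i" "i \<le> j" "j < k" "i + j \<le> k"
  shows "1 + alpha i + alpha j \<le> 2 * alpha k"
proof -
  have "finite {1 + alpha i + alpha j | i j. 0 < i \<and> i \<le> j \<and> j < k \<and> i + j \<le> k}"
    by (rule finite_subset[of _ "(\<lambda>(i, j). 1 + alpha i + alpha j) ` ({..k} \<times> {..k})"]) auto
  then have "1 + alpha i + alpha j \<le> Max {1 + alpha i + alpha j | i j. 0 < i \<and> i \<le> j \<and> j < k \<and> i + j \<le> k}"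
    by (rule Max_ge) (use assms in blast)
  then show ?thesis using assms alpha_rec[of k] by simp
qed

lemma alpha_ge_1: "1 \<le> alpha k"
proof (cases "k \<le> 1")
  case False
  then have "1 + alpha 1 + alpha 1 \<le> 2 * alpha k" by (intro alpha_pair) auto
  then show ?thesis by (simp add: alpha_le_1)
qed (simp add: alpha_le_1)

lemma alpha_Suc: "alpha k \<le> alpha (Suc k)"
proof (cases "k \<le> 1")
  case True
  then show ?thesis using alpha_ge_1[of "Suc k"] by (simp add: alpha_le_1)
next
  case False
  let ?C = "{1 + alpha i + alpha j | i j. 0 < i \<and> i \<le> j \<and> j < k \<and> i + j \<le> k}"
  have "finite ?C"
    by (rule finite_subset[of _ "(\<lambda>(i, j). 1 + alpha i + alpha j) ` ({..k} \<times> {..k})"]) auto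
  moreover have "?C \<noteq> {}" using False by (auto intro!: exI[of _ 1])
  moreover have "\<forall>x\<in>?C. x \<le> 2 * alpha (Suc k)" by (auto intro!: alpha_pair)
  ultimately have "Max ?C \<le> 2 * alpha (Suc k)" by simp
  then show ?thesis using alpha_rec[of k] False by simp
qed

lemma alpha_mono: "k \<le> k' \<Longrightarrow> alpha k \<le> alpha k'"
  by (induction k' rule: dec_induct) (auto intro: order_trans alpha_Suc)

text \<open>The recursion for \<open>\<alpha>\<close> only ranges over positive \<open>i \<le> j\<close>; the remaining cases follow
  by monotonicity.\<close>

lemma alpha_split:
  assumes "2 \<le> m" "m1 < m" "m2 < m" "m1 + m2 \<le> m"
  shows "1 + alpha m1 + alpha m2 \<le> 2 * alpha m"
proof -
  have "1 + alpha a + alpha b \<le> 2 * alpha m" if "a \<le> b" "b < m" "a + b \<le> m" for a b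
  proof (cases "a = 0")
    case True
    have "1 + alpha 1 + alpha (m - 1) \<le> 2 * alpha m" using assms by (intro alpha_pair) auto
    moreover have "alpha b \<le> alpha (m - 1)" using that by (intro alpha_mono) simp
    ultimately show ?thesis using True by (simp add: alpha_le_1)
  qed (use alpha_pair that in simp)
  from this[of m1 m2] this[of m2 m1] assms show ?thesis by (cases "m1 \<le> m2") auto
qed

section \<open>The induction on the number of toll arcs\<close>

lemma explore_ge_VP: "VP G P \<le> explore G ups n P"
  by (cases n) auto

lemma Ufree_st_eq_Linf: "Ufree G (src G) (snk G) \<noteq> \<infinity> \<Longrightarrow> Ufree G (src G) (snk G) = ereal (Linf G)"
  using Ufree_nonneg[of G "src G" "snk G"] by (cases "Ufree G (src G) (snk G)") (auto simp: Linf_def)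

lemma valid_decomp_facts:
  assumes valid: "valid_decomp G S0 xs" and st: "Ufree G (src G) (snk G) \<noteq> \<infinity>"
  defines "P \<equiv> S0 @ flat_blocks xs"
  shows "ntoll G P = length xs"
    and "\<And>l. l \<le> ntoll G P \<Longrightarrow> Uij G P l (l + 1) \<noteq> \<infinity>"
    and "\<And>i j. i < j \<Longrightarrow> j \<le> ntoll G P + 1 \<Longrightarrow> Lij G P i j \<le> Uij G P i j"
    and "Uij G P 0 (ntoll G P + 1) \<noteq> \<infinity>"
    and "Dij G P 0 (ntoll G P + 1) = ereal (Bval G P)"
proof -
  have dec: "toll_decomp G S0 xs"
    and tight: "\<forall>k\<le>length xs. Uij G P k (k + 1) = ereal (L0 G (seg S0 xs k))"
    and L_le_U: "\<forall>i j. i < j \<and> j \<le> length xs + 1 \<longrightarrow> Lij G P i j \<le> Uij G P i j"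
    using valid unfolding valid_decomp_def P_def by auto
  show nt: "ntoll G P = length xs" unfolding P_def by (rule ntoll_toll_decomp[OF dec])
  show "\<And>l. l \<le> ntoll G P \<Longrightarrow> Uij G P l (l + 1) \<noteq> \<infinity>" using tight nt by simp
  show "\<And>i j. i < j \<Longrightarrow> j \<le> ntoll G P + 1 \<Longrightarrow> Lij G P i j \<le> Uij G P i j" using L_le_U nt by simp
  have U: "Uij G P 0 (ntoll G P + 1) = ereal (Linf G)"
    using Ufree_st_eq_Linf[OF st] by (simp add: Uij_def TERMv_def INITv_def)
  then show "Uij G P 0 (ntoll G P + 1) \<noteq> \<infinity>" by simp
  have "Lij G P 0 (ntoll G P + 1) = ereal (L0 G P)"
    using Lij_len_upto[OF dec, of 0 "length xs + 1"] tight L0_len_upto[OF dec] nt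
    by (simp add: P_def len_upto_def toll_cost_def)
  then show "Dij G P 0 (ntoll G P + 1) = ereal (Bval G P)"
    using U by (simp add: Dij_def Bval_def)
qed

context
  fixes G :: "('v, 'e) tollnet" and ups :: "'v \<Rightarrow> 'v \<Rightarrow> 'e list"
  assumes disj: "tollA G \<inter> freeA G = {}"
    and ups: "\<And>u v Q. spath G (freeA G) u Q v \<Longrightarrow> spath G (freeA G) u (ups u v) v \<and> L0 G (ups u v) \<le> L0 G Q"
    and st: "Ufree G (src G) (snk G) \<noteq> \<infinity>"
begin

lemma child_of_pairs:
  assumes valid: "valid_decomp G S0 xs"
    and A: "interval_chain A" "set A \<subseteq> set (tp_pairs G (S0 @ flat_blocks xs))"
  defines "P \<equiv> S0 @ flat_blocks xs" and "t \<equiv> fst (maxrev G (S0 @ flat_blocks xs))"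
  shows "\<exists>Sc xsc. valid_decomp G Sc xsc \<and> buildp G ups P A 0 = Sc @ flat_blocks xsc
     \<and> L0 G (Sc @ flat_blocks xsc) = L0 G P + sum_list (map (\<lambda>p. tsum t (fst p) (snd p)) A)
     \<and> length xsc = card {x\<in>{1..<length xs + 1}. \<not> covered A x}"
proof -
  note facts = valid_decomp_facts[OF valid st]
  have dec: "toll_decomp G S0 xs"
    and tight: "\<forall>k\<le>length xs. Uij G P k (k + 1) = ereal (L0 G (seg S0 xs k))"
    using valid unfolding valid_decomp_def P_def by auto
  have "snd p \<le> length xs + 1 \<and> ereal (tsum t (fst p) (snd p)) = Dij G P (fst p) (snd p)"
    if "p \<in> set A" for p
    using tp_pairs_pair[OF facts(2-4), of p] facts(1) A(2) that unfolding P_def t_def by auto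
  then have bounded: "\<forall>p\<in>set A. snd p \<le> length xs + 1"
    and tight_pairs: "\<forall>p\<in>set A. ereal (tsum t (fst p) (snd p)) = Dij G P (fst p) (snd p)"
    by auto
  have feasible: "\<forall>i j. i < j \<and> j \<le> length xs + 1 \<longrightarrow> ereal (tsum t i j) \<le> Dij G P i j"
    using maxrev_feasible[OF facts(2-4)] facts(1) unfolding P_def t_def by auto
  have nonneg: "\<forall>l. 0 \<le> t l"
    using maxrev_nonneg[OF facts(2-4)] unfolding P_def t_def by auto
  interpret child_setup G S0 xs ups A t
    using dec disj ups A(1) bounded tight_pairs feasible nonneg tight unfolding P_def by unfold_locales
  show ?thesis using child_props unfolding P_def by blast
qed

lemma valid_decomp_nonempty:
  assumes valid: "valid_decomp G S0 xs"
    and short: "VP G (S0 @ flat_blocks xs) < Bval G (S0 @ flat_blocks xs)"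
  shows "1 \<le> length xs"
proof (rule ccontr)
  let ?P = "S0 @ flat_blocks xs"
  note facts = valid_decomp_facts[OF valid st]
  assume "\<not> 1 \<le> length xs"
  then have m0: "ntoll G ?P = 0" using facts(1) by linarith
  then have "VP G ?P = 0" by (simp add: VP_def)
  moreover have "Dij G ?P 0 1 = 0"
    using facts(4) m0 Uij_nonneg[of G ?P 0 1]
    by (cases "Uij G ?P 0 1") (simp_all add: Dij_def Lij_def)
  then have "Bval G ?P = 0" using facts(5) m0 by (simp add: zero_ereal_def)
  ultimately show False using short by simp
qed

text \<open>The even- and the odd-numbered pairs of TollPartition yield the children \<open>P\<^sub>1\<close> and \<open>P\<^sub>2\<close>;
  since the pairs carry all of \<open>V\<^sub>P\<close> and cover every toll arc, the children lose \<open>V\<^sub>P\<close>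
  between them and keep at most \<open>m\<close> toll arcs together.\<close>

lemma children_split:
  assumes valid: "valid_decomp G S0 xs"
    and short: "VP G (S0 @ flat_blocks xs) < Bval G (S0 @ flat_blocks xs)"
  defines "P \<equiv> S0 @ flat_blocks xs"
  shows "\<exists>Sa xsa Sb xsb. valid_decomp G Sa xsa \<and> valid_decomp G Sb xsb
     \<and> P1 G ups P = Sa @ flat_blocks xsa \<and> P2 G ups P = Sb @ flat_blocks xsb
     \<and> 2 \<le> length xs \<and> length xsa < length xs \<and> length xsb < length xs
     \<and> length xsa + length xsb \<le> length xs
     \<and> 2 * Bval G P = VP G P + Bval G (Sa @ flat_blocks xsa) + Bval G (Sb @ flat_blocks xsb)"
proof -
  note facts = valid_decomp_facts[OF valid st, folded P_def]
  let ?m = "length xs" and ?ps = "tp_pairs G P" and ?t = "fst (maxrev G P)"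
  let ?rev = "\<lambda>A. sum_list (map (\<lambda>p. tsum ?t (fst p) (snd p)) A)"
  define A1 where "A1 = nths ?ps {n. even n}"
  define A2 where "A2 = nths ?ps {n. odd n}"
  have pairs: "fst p + 1 < snd p \<and> snd p \<le> ?m + 1" if "p \<in> set ?ps" for p
    using tp_pairs_pair[OF facts(2-4) that] facts(1) by simp
  have two: "2 \<le> ?m" "2 \<le> length ?ps"
    using tp_pairs_two[OF facts(2-4)] facts(1,5) valid_decomp_nonempty[OF valid short] short
    unfolding P_def by auto
  have "interval_chain A1 \<and> interval_chain A2"
    using alt_disjoint_nths[OF tp_pairs_alt_disjoint[OF facts(2-4)]] pairs
    unfolding A1_def A2_def by fastforce
  moreover have "set A1 \<subseteq> set ?ps" "set A2 \<subseteq> set ?ps"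
    unfolding A1_def A2_def by (auto simp: set_nths_subset)
  ultimately obtain Sa xsa Sb xsb where
    a: "valid_decomp G Sa xsa" "buildp G ups P A1 0 = Sa @ flat_blocks xsa"
       "L0 G (Sa @ flat_blocks xsa) = L0 G P + ?rev A1"
       "length xsa = card {x\<in>{1..<?m + 1}. \<not> covered A1 x}"
    and b: "valid_decomp G Sb xsb" "buildp G ups P A2 0 = Sb @ flat_blocks xsb"
       "L0 G (Sb @ flat_blocks xsb) = L0 G P + ?rev A2"
       "length xsb = card {x\<in>{1..<?m + 1}. \<not> covered A2 x}"
    using child_of_pairs[OF valid, of A1] child_of_pairs[OF valid, of A2] unfolding P_def by meson
  have "\<forall>p\<in>set ?ps. fst p + 1 < snd p \<and> snd p \<le> ?m + 1" using pairs by blast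
  moreover have "covered ?ps x" if "1 \<le> x" "x \<le> ?m" for x
    using tp_pairs_covered[OF facts(2-4), of x] facts(1) that by simp
  ultimately have "length xsa < ?m" "length xsb < ?m" "length xsa + length xsb \<le> ?m"
    using card_uncovered_even_odd[of ?ps ?m] two(2) a(4) b(4) unfolding A1_def A2_def by simp_all
  moreover have "?rev A1 + ?rev A2 = VP G P"
    using sum_list_nths_even_odd[of _ ?ps] tp_pairs_tsum[OF facts(2-4)] unfolding A1_def A2_def by simp
  then have "2 * Bval G P = VP G P + Bval G (Sa @ flat_blocks xsa) + Bval G (Sb @ flat_blocks xsb)"
    using a(3) b(3) by (simp add: Bval_def)
  moreover have "P1 G ups P = Sa @ flat_blocks xsa" "P2 G ups P = Sb @ flat_blocks xsb"
    using a(2) b(2) unfolding P1_def P2_def A1_def A2_def by simp_all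
  ultimately show ?thesis using a(1) b(1) two(1) by blast
qed

lemma valid_decomp_explore:
  "valid_decomp G S0 xs \<Longrightarrow> length xs \<le> n \<Longrightarrow>
     Bval G (S0 @ flat_blocks xs) \<le> alpha (length xs) * explore G ups n (S0 @ flat_blocks xs)"
proof (induction n arbitrary: S0 xs rule: less_induct)
  case (less n S0 xs)
  let ?P = "S0 @ flat_blocks xs" and ?m = "length xs"
  note facts = valid_decomp_facts[OF less.prems(1) st]
  have VP: "0 \<le> VP G ?P" by (rule VP_nonneg[OF facts(2-4)])
  show ?case
  proof (cases "VP G ?P < Bval G ?P")
    case False
    then have "Bval G ?P \<le> VP G ?P" by simp
    also have "\<dots> \<le> alpha ?m * VP G ?P"
      using mult_right_mono[OF alpha_ge_1 VP] by simp
    also have "\<dots> \<le> alpha ?m * explore G ups n ?P"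
      using explore_ge_VP alpha_ge_1[of ?m] by (intro mult_left_mono) auto
    finally show ?thesis .
  next
    case True
    then obtain Sa xsa Sb xsb where ch: "valid_decomp G Sa xsa" "valid_decomp G Sb xsb"
      "P1 G ups ?P = Sa @ flat_blocks xsa" "P2 G ups ?P = Sb @ flat_blocks xsb"
      "2 \<le> ?m" "length xsa < ?m" "length xsb < ?m" "length xsa + length xsb \<le> ?m"
      "2 * Bval G ?P = VP G ?P + Bval G (Sa @ flat_blocks xsa) + Bval G (Sb @ flat_blocks xsb)"
      using children_split[OF less.prems(1)] by blast
    obtain n' where n: "n = Suc n'" using ch(5) less.prems(2) by (cases n) auto
    define M where "M = max (VP G ?P) (max (explore G ups n' (Sa @ flat_blocks xsa)) (explore G ups n' (Sb @ flat_blocks xsb)))"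
    have ex: "explore G ups n ?P = M" unfolding M_def n using True ch(3,4) by simp
    have "Bval G (Sa @ flat_blocks xsa) \<le> alpha (length xsa) * M"
      using less.IH[of n' Sa xsa] ch(1,6) less.prems(2) n alpha_ge_1[of "length xsa"]
      by (force simp: M_def intro: order_trans mult_left_mono)
    moreover have "Bval G (Sb @ flat_blocks xsb) \<le> alpha (length xsb) * M"
      using less.IH[of n' Sb xsb] ch(2,7) less.prems(2) n alpha_ge_1[of "length xsb"]
      by (force simp: M_def intro: order_trans mult_left_mono)
    moreover have "VP G ?P \<le> M" by (simp add: M_def)
    ultimately have "2 * Bval G ?P \<le> (1 + alpha (length xsa) + alpha (length xsb)) * M"
      using ch(9) by (simp add: algebra_simps)
    also have "\<dots> \<le> (2 * alpha ?m) * M"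
      using alpha_split[OF ch(5-8)] VP by (intro mult_right_mono) (auto simp: M_def)
    finally show ?thesis using ex by simp
  qed
qed

end

lemma walk_append: "walk G u (A @ B) v \<longleftrightarrow> (\<exists>w. walk G u A w \<and> walk G w B v)"
  by (induction A arbitrary: u) auto

lemma walk_appendI: "walk G u A w \<Longrightarrow> walk G w B v \<Longrightarrow> walk G u (A @ B) v"
  by (induction A arbitrary: u) auto

lemma walk_snoc_end: "walk G u (A @ [e]) w \<Longrightarrow> w = arc_head G e"
  by (induction A arbitrary: u) auto

lemma walk_mem: "walk G u A w \<Longrightarrow> w \<in> set (u # map (arc_head G) A)"
  by (induction A arbitrary: u) auto

lemma walk_take_drop: "walk G u W v \<Longrightarrow> k \<le> length W \<Longrightarrow>
  walk G u (take k W) ((u # map (arc_head G) W) ! k) \<and> walk G ((u # map (arc_head G) W) ! k) (drop k W) v"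
proof (induction W arbitrary: u k)
  case Nil then show ?case by simp
next
  case (Cons e W)
  show ?case
  proof (cases k)
    case 0 then show ?thesis using Cons by simp
  next
    case (Suc k')
    then show ?thesis using Cons.IH[of "arc_head G e" k'] Cons.prems by simp
  qed
qed

lemma L0_take_drop: "L0 G W = L0 G (take k W) + L0 G (drop k W)"
  by (metis L0_append append_take_drop_id)

lemma walk_shortcut:
  assumes w: "walk G u W v" and nd: "\<not> distinct (u # map (arc_head G) W)"
  shows "\<exists>W'. walk G u W' v \<and> set W' \<subseteq> set W \<and> length W' < length W \<and> L0 G W' \<le> L0 G W"
proof -
  let ?vs = "u # map (arc_head G) W"
  obtain i j where ij: "i < j" "j \<le> length W" "?vs ! i = ?vs ! j"
  proof -
    obtain i j where "i < length ?vs" "j < length ?vs" "i \<noteq> j" "?vs ! i = ?vs ! j"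
      using nd by (auto simp: distinct_conv_nth)
    then show thesis using that[of i j] that[of j i] by (cases "i < j") auto
  qed
  define W' where "W' = take i W @ drop j W"
  have "walk G u W' v"
    unfolding W'_def using walk_take_drop[OF w, of i] walk_take_drop[OF w, of j] ij
    by (auto intro: walk_appendI)
  moreover have "set W' \<subseteq> set W" unfolding W'_def using set_take_subset set_drop_subset by fastforce
  moreover have "length W' < length W" unfolding W'_def using ij by simp
  moreover have "L0 G W' \<le> L0 G W"
  proof -
    have "L0 G W = L0 G (take i W) + L0 G (take (j - i) (drop i W)) + L0 G (drop j W)"
      using L0_take_drop[of G W i] L0_take_drop[of G "drop i W" "j - i"] ij by simp
    then show ?thesis unfolding W'_def L0_append using L0_nonneg[of G "take (j - i) (drop i W)"] by simp
  qed
  ultimately show ?thesis by blast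
qed

lemma walk_imp_shorter_spath:
  "walk G u W v \<Longrightarrow> set W \<subseteq> S \<Longrightarrow> \<exists>Q. spath G S u Q v \<and> L0 G Q \<le> L0 G W"
proof (induction "length W" arbitrary: W rule: less_induct)
  case less
  show ?case
  proof (cases "distinct (u # map (arc_head G) W)")
    case True
    then show ?thesis using less.prems by (intro exI[of _ W]) (auto simp: spath_def)
  next
    case False
    then obtain W' where "walk G u W' v" "set W' \<subseteq> set W" "length W' < length W" "L0 G W' \<le> L0 G W"
      using walk_shortcut[OF less.prems(1)] by blast
    then show ?thesis using less.hyps[of W'] less.prems(2) by fastforce
  qed
qed

section \<open>Shortest paths are valid\<close>

text \<open>For \<open>i < j\<close>, the path splits into the part up to the head of \<open>\<tau>\<^sub>i\<close>, the stretch between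
  \<open>\<tau>\<^sub>i\<close> and \<open>\<tau>\<^sub>j\<close>, and the part from the tail of \<open>\<tau>\<^sub>j\<close> on.\<close>

definition dec_prefix :: "'e list \<Rightarrow> ('e \<times> 'e list) list \<Rightarrow> nat \<Rightarrow> 'e list" where
  "dec_prefix S0 xs i = (if i = 0 then [] else S0 @ flat_blocks (take (i - 1) xs) @ [fst (xs ! (i - 1))])"

definition dec_piece :: "'e list \<Rightarrow> ('e \<times> 'e list) list \<Rightarrow> nat \<Rightarrow> nat \<Rightarrow> 'e list" where
  "dec_piece S0 xs i j = seg S0 xs i @ flat_blocks (take (j - i - 1) (drop i xs))"

definition dec_suffix :: "('e \<times> 'e list) list \<Rightarrow> nat \<Rightarrow> 'e list" where
  "dec_suffix xs j = flat_blocks (drop (j - 1) xs)"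

lemma toll_decomp_split3:
  assumes ij: "i < j" "j \<le> length xs + 1"
  shows "S0 @ flat_blocks xs = dec_prefix S0 xs i @ dec_piece S0 xs i j @ dec_suffix xs j"
proof (cases "i = 0")
  case True
  then show ?thesis
    using flat_blocks_take_drop[of xs "j - 1"] by (simp add: dec_prefix_def dec_piece_def dec_suffix_def seg_def)
next
  case False
  have "flat_blocks xs = flat_blocks (take (i - 1) xs) @ fst (xs ! (i - 1)) # snd (xs ! (i - 1))
      @ flat_blocks (take (j - i - 1) (drop i xs)) @ flat_blocks (drop (j - 1) xs)"
    using flat_blocks_take_drop[of xs "i - 1"] flat_blocks_drop_nth[of "i - 1" xs]
      flat_blocks_take_drop[of "drop i xs" "j - i - 1"] ij False by simp
  then show ?thesis using False unfolding dec_prefix_def dec_piece_def dec_suffix_def seg_def by simp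
qed

context
  fixes G :: "('v, 'e) tollnet" and S0 :: "'e list" and xs :: "('e \<times> 'e list) list"
  assumes dec: "toll_decomp G S0 xs"
begin

lemma L0_dec_prefix: "i \<le> length xs \<Longrightarrow> L0 G (dec_prefix S0 xs i) = len_upto G S0 xs i + toll_cost G xs i"
proof (cases "i = 0")
  case True
  then show ?thesis by (simp add: dec_prefix_def len_upto_def toll_cost_def L0_def plen_def)
next
  case False
  assume i: "i \<le> length xs"
  have "fst (xs ! (i - 1)) \<in> tollA G" using dec i False unfolding toll_decomp_def by auto
  then show ?thesis using False L0_prefix[OF dec, of "i - 1"] i
    by (simp add: dec_prefix_def L0_append L0_Cons arc_cost_toll toll_cost_def L0_def[of G "[]"] plen_def)
qed

lemma L0_dec_suffix:
  "1 \<le> j \<Longrightarrow> j \<le> length xs + 1 \<Longrightarrow>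
     L0 G (dec_suffix xs j) = len_upto G S0 xs (length xs + 1) - len_upto G S0 xs j"
proof -
  assume j: "1 \<le> j" "j \<le> length xs + 1"
  have "L0 G (S0 @ flat_blocks xs) = L0 G (S0 @ flat_blocks (take (j - 1) xs)) + L0 G (dec_suffix xs j)"
    using flat_blocks_take_drop[of xs "j - 1"] unfolding dec_suffix_def by (simp add: L0_append)
  then show ?thesis using L0_len_upto[OF dec] L0_prefix[OF dec, of "j - 1"] j by simp
qed

lemma L0_dec_piece:
  "i < j \<Longrightarrow> j \<le> length xs + 1 \<Longrightarrow>
     L0 G (dec_piece S0 xs i j) = len_upto G S0 xs j - len_upto G S0 xs i - toll_cost G xs i"
  using toll_decomp_split3[of i j xs S0] L0_len_upto[OF dec] L0_dec_prefix[of i] L0_dec_suffix[of j]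
  by (simp add: L0_append)

lemma walk_dec_prefix_end:
  "walk G (src G) (dec_prefix S0 xs i) w \<Longrightarrow> i \<le> length xs \<Longrightarrow> w = TERMv G (S0 @ flat_blocks xs) i"
  using walk_snoc_end[of G "src G" "S0 @ flat_blocks (take (i - 1) xs)"] tau_toll_decomp[OF dec, of i]
  by (cases "i = 0") (auto simp: dec_prefix_def TERMv_def)

lemma walk_dec_suffix_start:
  assumes w: "walk G u (dec_suffix xs j) (snk G)" and j: "1 \<le> j" "j \<le> length xs + 1"
  shows "u = INITv G (S0 @ flat_blocks xs) j"
proof (cases "j = length xs + 1")
  case True
  then show ?thesis using w ntoll_toll_decomp[OF dec] by (simp add: dec_suffix_def INITv_def)
next
  case False
  then have "dec_suffix xs j = fst (xs ! (j - 1)) # snd (xs ! (j - 1)) @ flat_blocks (drop j xs)"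
    using flat_blocks_drop_nth[of "j - 1" xs] j by (simp add: dec_suffix_def)
  then show ?thesis
    using w False tau_toll_decomp[OF dec, of j] j ntoll_toll_decomp[OF dec] by (simp add: INITv_def)
qed

end

lemma distinct_map_middle:
  "distinct (u # map f (A @ B @ C)) \<Longrightarrow> w \<in> set (u # map f A) \<Longrightarrow> distinct (w # map f B)"
  by auto

context
  fixes G :: "('v, 'e) tollnet" and S0 :: "'e list" and xs :: "('e \<times> 'e list) list"
  assumes dec: "toll_decomp G S0 xs"
    and sp: "spath G (allA G) (src G) (S0 @ flat_blocks xs) (snk G)"
    and short: "\<And>Q. spath G (allA G) (src G) Q (snk G) \<Longrightarrow> L0 G (S0 @ flat_blocks xs) \<le> L0 G Q"
begin

lemma walk_split3:
  assumes ij: "i < j" "j \<le> length xs + 1"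
  defines "P \<equiv> S0 @ flat_blocks xs"
  shows "walk G (src G) (dec_prefix S0 xs i) (TERMv G P i)"
    and "walk G (TERMv G P i) (dec_piece S0 xs i j) (INITv G P j)"
    and "walk G (INITv G P j) (dec_suffix xs j) (snk G)"
proof -
  have "walk G (src G) (dec_prefix S0 xs i @ dec_piece S0 xs i j @ dec_suffix xs j) (snk G)"
    using sp toll_decomp_split3[OF ij] unfolding spath_def by simp
  then obtain w1 w2 where w: "walk G (src G) (dec_prefix S0 xs i) w1"
      "walk G w1 (dec_piece S0 xs i j) w2" "walk G w2 (dec_suffix xs j) (snk G)"
    unfolding walk_append by blast
  moreover have "w1 = TERMv G P i" using walk_dec_prefix_end[OF dec w(1)] ij P_def by simp
  moreover have "w2 = INITv G P j" using walk_dec_suffix_start[OF dec w(3)] ij P_def by simp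
  ultimately show "walk G (src G) (dec_prefix S0 xs i) (TERMv G P i)"
    "walk G (TERMv G P i) (dec_piece S0 xs i j) (INITv G P j)"
    "walk G (INITv G P j) (dec_suffix xs j) (snk G)" by simp_all
qed

text \<open>A toll-free bypass shorter than the stretch it replaces would, after removing cycles,
  give an \<open>s\<close>-\<open>t\<close> path shorter than the shortest path.\<close>

lemma L0_dec_piece_le_Uij:
  assumes ij: "i < j" "j \<le> length xs + 1"
  shows "ereal (L0 G (dec_piece S0 xs i j)) \<le> Uij G (S0 @ flat_blocks xs) i j"
  unfolding Uij_def
proof (rule le_Ufree)
  let ?P = "S0 @ flat_blocks xs"
  fix R assume R: "spath G (freeA G) (TERMv G ?P i) R (INITv G ?P j)"
  have e: "?P = dec_prefix S0 xs i @ dec_piece S0 xs i j @ dec_suffix xs j"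
    using toll_decomp_split3[OF ij] .
  have "walk G (TERMv G ?P i) R (INITv G ?P j)" using R unfolding spath_def by simp
  then have w: "walk G (src G) (dec_prefix S0 xs i @ R @ dec_suffix xs j) (snk G)"
    by (intro walk_appendI[OF walk_split3(1)[OF ij]] walk_appendI[OF _ walk_split3(3)[OF ij]])
  have "set (dec_prefix S0 xs i @ R @ dec_suffix xs j) \<subseteq> allA G"
  proof -
    have "set (dec_prefix S0 xs i @ dec_piece S0 xs i j @ dec_suffix xs j) \<subseteq> allA G"
      using sp unfolding e[symmetric] spath_def by simp
    moreover have "set R \<subseteq> allA G" using R unfolding spath_def allA_def by blast
    ultimately show ?thesis by auto
  qed
  then obtain Q where Q: "spath G (allA G) (src G) Q (snk G)"
      "L0 G Q \<le> L0 G (dec_prefix S0 xs i @ R @ dec_suffix xs j)"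
    using walk_imp_shorter_spath[OF w] by blast
  then have "L0 G ?P \<le> L0 G (dec_prefix S0 xs i @ R @ dec_suffix xs j)"
    using short[OF Q(1)] by simp
  then show "ereal (L0 G (dec_piece S0 xs i j)) \<le> ereal (L0 G R)"
    using e by (simp add: L0_append)
qed

lemma Uij_seg:
  assumes k: "k \<le> length xs"
  shows "Uij G (S0 @ flat_blocks xs) k (k + 1) = ereal (L0 G (seg S0 xs k))"
proof (rule antisym)
  let ?P = "S0 @ flat_blocks xs"
  have ij: "k < k + 1" "k + 1 \<le> length xs + 1" using k by auto
  have pc: "dec_piece S0 xs k (k + 1) = seg S0 xs k" by (simp add: dec_piece_def)
  have e: "?P = dec_prefix S0 xs k @ seg S0 xs k @ dec_suffix xs (k + 1)"
    using toll_decomp_split3[OF ij] pc by simp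
  have "spath G (freeA G) (TERMv G ?P k) (seg S0 xs k) (INITv G ?P (k + 1))"
    unfolding spath_def
  proof (intro conjI)
    show "walk G (TERMv G ?P k) (seg S0 xs k) (INITv G ?P (k + 1))"
      using walk_split3(2)[OF ij] pc by simp
    have "distinct (src G # map (arc_head G) ?P)" using sp unfolding spath_def by simp
    then have "distinct (src G # map (arc_head G) (dec_prefix S0 xs k @ seg S0 xs k @ dec_suffix xs (k + 1)))"
      by (simp only: e[symmetric])
    moreover have "TERMv G ?P k \<in> set (src G # map (arc_head G) (dec_prefix S0 xs k))"
      by (rule walk_mem[OF walk_split3(1)[OF ij]])
    ultimately show "distinct (TERMv G ?P k # map (arc_head G) (seg S0 xs k))"
      by (rule distinct_map_middle)
    have "toll_free G (seg S0 xs k)"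
      using dec k unfolding toll_decomp_def seg_def by (cases k) auto
    moreover have "set (dec_prefix S0 xs k @ seg S0 xs k @ dec_suffix xs (k + 1)) \<subseteq> allA G"
      using sp unfolding e[symmetric] spath_def by simp
    then have "set (seg S0 xs k) \<subseteq> allA G" by simp
    ultimately show "set (seg S0 xs k) \<subseteq> freeA G" unfolding toll_free_def allA_def by auto
  qed
  then show "Uij G ?P k (k + 1) \<le> ereal (L0 G (seg S0 xs k))"
    unfolding Uij_def by (rule Ufree_le)
  show "ereal (L0 G (seg S0 xs k)) \<le> Uij G ?P k (k + 1)"
    using L0_dec_piece_le_Uij[OF ij] pc by simp
qed

lemma shortest_path_valid: "valid_decomp G S0 xs"
  unfolding valid_decomp_def
proof (intro conjI allI impI)
  show "toll_decomp G S0 xs" by (rule dec)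
  show "Uij G (S0 @ flat_blocks xs) k (k + 1) = ereal (L0 G (seg S0 xs k))" if "k \<le> length xs" for k
    using Uij_seg[OF that] .
  then have "Lij G (S0 @ flat_blocks xs) i j = ereal (L0 G (dec_piece S0 xs i j))"
    if "i < j" "j \<le> length xs + 1" for i j
    using Lij_len_upto[OF dec, of i j] L0_dec_piece[OF dec, of i j] that by simp
  then show "Lij G (S0 @ flat_blocks xs) i j \<le> Uij G (S0 @ flat_blocks xs) i j"
    if "i < j \<and> j \<le> length xs + 1" for i j
    using L0_dec_piece_le_Uij that by simp
qed

end

section \<open>Comparison with the optimum\<close>

lemma plen_eq_L0_revenue: "plen G T P = L0 G P + revenue G T P"
  unfolding plen_def L0_def revenue_def by (induction P) (simp_all add: arc_cost_def)

lemma revenue_toll_free: "set Q \<inter> tollA G = {} \<Longrightarrow> revenue G T Q = 0"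
  unfolding revenue_def by (induction Q) auto

lemma ntoll_le_card:
  assumes "finite (tollA G)" "distinct P"
  shows "ntoll G P \<le> card (tollA G)"
proof -
  have "ntoll G P = length (filter (\<lambda>e. e \<in> tollA G) (map (\<lambda>n. P ! n) [0..<length P]))"
    by (simp add: ntoll_def tpos_def filter_map o_def)
  also have "\<dots> = card (set (filter (\<lambda>e. e \<in> tollA G) P))"
    using distinct_card[OF distinct_filter[OF assms(2)]] by (simp add: map_nth)
  also have "\<dots> \<le> card (tollA G)" using assms(1) by (intro card_mono) auto
  finally show ?thesis .
qed

lemma spath_free_imp_all: "spath G (freeA G) u Q v \<Longrightarrow> spath G (allA G) u Q v"
  unfolding spath_def allA_def by auto

context
  fixes G :: "('v, 'e) tollnet" and P0 :: "'e list"
  assumes inst: "maxtoll_instance G"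
    and P0: "shortest_stpath G (\<lambda>_. 0) (allA G) P0"
begin

lemma Ufree_st_finite: "Ufree G (src G) (snk G) \<noteq> \<infinity>"
proof -
  obtain Q where "spath G (freeA G) (src G) Q (snk G)"
    using inst unfolding maxtoll_instance_def by blast
  then show ?thesis using Ufree_le[of G "src G" Q "snk G"] by auto
qed

lemma le_Linf: "(\<And>Q. spath G (freeA G) (src G) Q (snk G) \<Longrightarrow> x \<le> L0 G Q) \<Longrightarrow> x \<le> Linf G"
  using le_Ufree[of G "src G" "snk G" "ereal x"] Ufree_st_eq_Linf[OF Ufree_st_finite] by simp

lemma Bval_P0_nonneg: "0 \<le> Linf G - L0 G P0"
proof -
  have "L0 G P0 \<le> L0 G Q" if "spath G (freeA G) (src G) Q (snk G)" for Q
    using P0 spath_free_imp_all[OF that] unfolding shortest_stpath_def L0_def by blast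
  then show ?thesis using le_Linf[of "L0 G P0"] by simp
qed

text \<open>Any path that is shortest under tolls \<open>T\<close> costs at most a toll-free \<open>s\<close>-\<open>t\<close> path,
  and its toll-free part is at least \<open>\<L>(P\<^sub>0)\<close>.\<close>

lemma OPT_le_Bval: "OPT G \<le> Linf G - L0 G P0"
  unfolding OPT_def
proof (rule cSup_least)
  show "{revenue G T P |T P. (\<forall>e\<in>tollA G. 0 \<le> T e) \<and> shortest_stpath G T (allA G) P} \<noteq> {}"
    using P0 by (intro ex_in_conv[THEN iffD1] exI[of _ "revenue G (\<lambda>_. 0) P0"]) blast
  fix x assume "x \<in> {revenue G T P |T P. (\<forall>e\<in>tollA G. 0 \<le> T e) \<and> shortest_stpath G T (allA G) P}"
  then obtain T P where x: "x = revenue G T P" and sh: "shortest_stpath G T (allA G) P" by blast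
  have "x + L0 G P0 \<le> L0 G Q" if Q: "spath G (freeA G) (src G) Q (snk G)" for Q
  proof -
    have "plen G T P \<le> plen G T Q"
      using sh spath_free_imp_all[OF Q] unfolding shortest_stpath_def by blast
    moreover have "revenue G T Q = 0"
      using Q inst unfolding spath_def maxtoll_instance_def by (intro revenue_toll_free) auto
    moreover have "L0 G P0 \<le> L0 G P" using P0 sh unfolding shortest_stpath_def L0_def by blast
    ultimately show ?thesis using x by (simp add: plen_eq_L0_revenue)
  qed
  then show "x \<le> Linf G - L0 G P0" using le_Linf[of "x + L0 G P0"] by simp
qed

lemma shortest_path_explore:
  assumes ups: "\<And>u v Q. spath G (freeA G) u Q v \<Longrightarrow>
      spath G (freeA G) u (ups u v) v \<and> L0 G (ups u v) \<le> L0 G Q"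
  shows "Linf G - L0 G P0 \<le> alpha (ntoll G P0) * explore G ups (ntoll G P0 + 1) P0"
proof -
  obtain S0 xs where dec: "toll_decomp G S0 xs" and P0_eq: "P0 = S0 @ flat_blocks xs"
    using exists_toll_decomp by blast
  have "valid_decomp G S0 xs"
    using shortest_path_valid[OF dec] P0 P0_eq unfolding shortest_stpath_def L0_def by simp
  moreover have "tollA G \<inter> freeA G = {}" using inst unfolding maxtoll_instance_def by simp
  ultimately show ?thesis
    using valid_decomp_explore[OF _ ups Ufree_st_finite, of S0 xs "length xs + 1"]
      ntoll_toll_decomp[OF dec] P0_eq
    by (simp add: Bval_def del: explore.simps)
qed

end

theorem corollary2:
  fixes G :: "('v, 'e) tollnet" and ups :: "'v \<Rightarrow> 'v \<Rightarrow> 'e list" and P0 :: "'e list"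
  assumes inst: "maxtoll_instance G"
    and ups: "\<And>u v Q. spath G (freeA G) u Q v \<Longrightarrow>
                 spath G (freeA G) u (ups u v) v \<and> L0 G (ups u v) \<le> L0 G Q"
    and P0: "shortest_stpath G (\<lambda>_. 0) (allA G) P0"
    and m: "ntoll G P0 \<ge> 1"
  shows "explore G ups (ntoll G P0 + 1) P0 \<ge> (Linf G - L0 G P0) / alpha (ntoll G P0)
       \<and> (Linf G - L0 G P0) / alpha (ntoll G P0) \<ge> OPT G / alpha (card (tollA G))"
proof
  have alpha_pos: "0 < alpha k" for k using alpha_ge_1[of k] by simp
  then show "(Linf G - L0 G P0) / alpha (ntoll G P0) \<le> explore G ups (ntoll G P0 + 1) P0"
    using shortest_path_explore[OF inst P0 ups] by (simp add: pos_divide_le_eq mult.commute)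
  have "distinct P0" using P0 unfolding shortest_stpath_def spath_def by (simp add: distinct_map)
  then have "ntoll G P0 \<le> card (tollA G)"
    using ntoll_le_card inst unfolding maxtoll_instance_def by blast
  then have "(Linf G - L0 G P0) / alpha (card (tollA G)) \<le> (Linf G - L0 G P0) / alpha (ntoll G P0)"
    using Bval_P0_nonneg[OF inst P0] alpha_pos alpha_mono by (intro divide_left_mono) auto
  moreover have "OPT G / alpha (card (tollA G)) \<le> (Linf G - L0 G P0) / alpha (card (tollA G))"
    using OPT_le_Bval[OF inst P0] alpha_pos by (intro divide_right_mono) (auto intro: less_imp_le)
  ultimately show "OPT G / alpha (card (tollA G)) \<le> (Linf G - L0 G P0) / alpha (ntoll G P0)"
    by linarith
qed
end
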